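(* In the network revenue management problem described in the context, the Frequent Re-solving policy satisfies $v^{\mathrm{DLP}}-v^{\mathrm{FR}}=O(\sqrt{T})$: there exist constants $M$ and $T_1$ depending only on $\lambda_1,\dots,\lambda_n$, $r_1,\dots,r_n$ and $A$ (not on the capacities $C_1,\dots,C_m$) such that $v^{\mathrm{DLP}}-v^{\mathrm{FR}}\le M\sqrt{T}$ for all $T\ge T_1$.
   Context: NRM problem: horizon $[0,T]$, $T$ a positive integer; $n$ classes with independent Poisson arrivals $\Lambda_j(t)$ of rates $\lambda_j>0$; $m$ resources with initial capacities $C=(C_1,\dots,C_m)^\top$; accepting a class-$j$ customer earns $r_j\ge0$ and consumes $A_j=(a_{1j},\dots,a_{mj})^\top$, $a_{lj}\ge0$, $A=(a_{lj})$. Customers are irrevocably accepted or rejected upon arrival and can only be accepted if $A_j$ is componentwise at most the remaining capacity. Deterministic LP value: $v^{\mathrm{DLP}}=\max\{T\sum_jr_jx_j:\sum_jA_jx_j\le C/T,\ 0\le x_j\le\lambda_j\}$. Frequent Re-solving (FR) policy: for each $t=0,1,\dots,T-1$, with remaining capacity $C(t)$ and $b(t)=C(t)/(T-t)$, compute an optimal solution $x(t)$ of $\max\{\sum_jr_jx_j:\sum_jA_jx_j\le b(t),\ 0\le x_j\le\lambda_j\}$; during $[t,t+1)$ each arriving class-$j$ customer is accepted independently with probability $x_j(t)/\lambda_j$ if capacity suffices, and rejected otherwise. $v^{\mathrm{FR}}$ is its expected revenue. *)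

theory Defs
  imports "HOL-Probability.Probability"
begin

(* Classes are indexed by a finite type 'n, resources by a finite type 'm.
   lam j = arrival rate, r j = revenue, A l j = a_{lj}, capacities c :: 'm => real. *)

definition lp_feasible ::
  "('n::finite \<Rightarrow> real) \<Rightarrow> ('m::finite \<Rightarrow> 'n \<Rightarrow> real) \<Rightarrow> ('m \<Rightarrow> real) \<Rightarrow> ('n \<Rightarrow> real) \<Rightarrow> bool" where
  "lp_feasible lam A b x \<longleftrightarrow>
     (\<forall>l. (\<Sum>j\<in>UNIV. A l j * x j) \<le> b l) \<and> (\<forall>j. 0 \<le> x j \<and> x j \<le> lam j)"

definition lp_value ::
  "('n::finite \<Rightarrow> real) \<Rightarrow> ('n \<Rightarrow> real) \<Rightarrow> ('m::finite \<Rightarrow> 'n \<Rightarrow> real) \<Rightarrow> ('m \<Rightarrow> real) \<Rightarrow> real" where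
  "lp_value lam r A b = Sup ((\<lambda>x. \<Sum>j\<in>UNIV. r j * x j) ` {x. lp_feasible lam A b x})"

definition lp_optimal ::
  "('n::finite \<Rightarrow> real) \<Rightarrow> ('n \<Rightarrow> real) \<Rightarrow> ('m::finite \<Rightarrow> 'n \<Rightarrow> real) \<Rightarrow> ('m \<Rightarrow> real) \<Rightarrow> ('n \<Rightarrow> real) \<Rightarrow> bool" where
  "lp_optimal lam r A b x \<longleftrightarrow> lp_feasible lam A b x \<and>
     (\<forall>y. lp_feasible lam A b y \<longrightarrow> (\<Sum>j\<in>UNIV. r j * y j) \<le> (\<Sum>j\<in>UNIV. r j * x j))"

definition v_DLP ::
  "('n::finite \<Rightarrow> real) \<Rightarrow> ('n \<Rightarrow> real) \<Rightarrow> ('m::finite \<Rightarrow> 'n \<Rightarrow> real) \<Rightarrow> ('m \<Rightarrow> real) \<Rightarrow> nat \<Rightarrow> real" where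
  "v_DLP lam r A C T = real T * lp_value lam r A (\<lambda>l. C l / real T)"

(* class of an arrival in the superposed Poisson stream: j with probability lam j / sum_k lam k *)
definition class_pmf :: "('n::finite \<Rightarrow> real) \<Rightarrow> 'n pmf" where
  "class_pmf lam = embed_pmf (\<lambda>j. lam j / (\<Sum>k\<in>UNIV. lam k))"

(* state = (remaining capacity, accumulated revenue); one arrival under
   acceptance probabilities x j / lam j, accepted only if capacity suffices *)
definition arrival ::
  "('n::finite \<Rightarrow> real) \<Rightarrow> ('n \<Rightarrow> real) \<Rightarrow> ('m::finite \<Rightarrow> 'n \<Rightarrow> real) \<Rightarrow> ('n \<Rightarrow> real)
   \<Rightarrow> ('m \<Rightarrow> real) \<times> real \<Rightarrow> (('m \<Rightarrow> real) \<times> real) pmf" where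
  "arrival lam r A x s =
     class_pmf lam \<bind> (\<lambda>j. bernoulli_pmf (x j / lam j) \<bind> (\<lambda>acc.
       return_pmf (if acc \<and> (\<forall>l. A l j \<le> fst s l)
                   then ((\<lambda>l. fst s l - A l j), snd s + r j) else s)))"

primrec arrivals ::
  "('n::finite \<Rightarrow> real) \<Rightarrow> ('n \<Rightarrow> real) \<Rightarrow> ('m::finite \<Rightarrow> 'n \<Rightarrow> real) \<Rightarrow> ('n \<Rightarrow> real)
   \<Rightarrow> nat \<Rightarrow> ('m \<Rightarrow> real) \<times> real \<Rightarrow> (('m \<Rightarrow> real) \<times> real) pmf" where
  "arrivals lam r A x 0 s = return_pmf s"
| "arrivals lam r A x (Suc k) s = arrivals lam r A x k s \<bind> arrival lam r A x"

(* one unit period [t,t+1): Poisson(sum_j lam_j) many arrivals, processed in order *)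
definition period ::
  "('n::finite \<Rightarrow> real) \<Rightarrow> ('n \<Rightarrow> real) \<Rightarrow> ('m::finite \<Rightarrow> 'n \<Rightarrow> real) \<Rightarrow> ('n \<Rightarrow> real)
   \<Rightarrow> ('m \<Rightarrow> real) \<times> real \<Rightarrow> (('m \<Rightarrow> real) \<times> real) pmf" where
  "period lam r A x s = poisson_pmf (\<Sum>k\<in>UNIV. lam k) \<bind> (\<lambda>N. arrivals lam r A x N s)"

(* state distribution after the first t periods of the FR policy with horizon T;
   sel is the LP solver: sel b is the chosen optimal solution for right-hand side b *)
primrec fr_run ::
  "('n::finite \<Rightarrow> real) \<Rightarrow> ('n \<Rightarrow> real) \<Rightarrow> ('m::finite \<Rightarrow> 'n \<Rightarrow> real)
   \<Rightarrow> (('m \<Rightarrow> real) \<Rightarrow> ('n \<Rightarrow> real)) \<Rightarrow> ('m \<Rightarrow> real) \<Rightarrow> nat \<Rightarrow> nat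
   \<Rightarrow> (('m \<Rightarrow> real) \<times> real) pmf" where
  "fr_run lam r A sel C T 0 = return_pmf (C, 0)"
| "fr_run lam r A sel C T (Suc t) =
     fr_run lam r A sel C T t \<bind>
       (\<lambda>s. period lam r A (sel (\<lambda>l. fst s l / real (T - t))) s)"

definition v_FR ::
  "('n::finite \<Rightarrow> real) \<Rightarrow> ('n \<Rightarrow> real) \<Rightarrow> ('m::finite \<Rightarrow> 'n \<Rightarrow> real)
   \<Rightarrow> (('m \<Rightarrow> real) \<Rightarrow> ('n \<Rightarrow> real)) \<Rightarrow> ('m \<Rightarrow> real) \<Rightarrow> nat \<Rightarrow> real" where
  "v_FR lam r A sel C T = measure_pmf.expectation (fr_run lam r A sel C T T) snd"

end

theory Submission
  imports Defs
begin

(* During one period the policy applies a fixed solution x of the LP with right-hand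
   side c / tau, tau the number of remaining periods.  Counting, for every class,
   the arrivals whose acceptance coin succeeds gives a revenue of expectation sum_j r_j x_j;
   such an arrival is lost only if its class was blocked by a resource, and because x is
   feasible for c / tau the expected loss is O(1 / sqrt tau).  The LP value at the current
   state falls short of the initial value v_DLP / T by at most a constant times the total
   shortfall of the current right-hand side below C / T.  The expected squared shortfall grows
   by O(1 / tau^2) per period and hence stays O(1 / tau), so the shortfall costs O(1 / sqrt tau)
   per period as well.  Summing over the periods, sum_t 1 / sqrt (T - t) <= 2 sqrt T. *)

section \<open>Poisson moments and integrals over probability mass functions\<close>

lemma poisson_sums:
  fixes L :: real
  shows "(\<lambda>k. L ^ k / fact k * exp (-L)) sums 1"
proof -
  have "(\<lambda>k. L ^ k /\<^sub>R fact k) = (\<lambda>k. L ^ k / fact k)"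
    by (simp add: field_simps)
  then have "(\<lambda>k. L ^ k / fact k) sums exp L"
    using exp_converges[of L] by simp
  from sums_mult2[OF this, of "exp (-L)"] show ?thesis
    by (simp add: exp_minus)
qed

lemma poisson_sums_of_nat:
  fixes L :: real
  shows "(\<lambda>k. real k * (L ^ k / fact k * exp (-L))) sums L"
proof (rule sums_Suc_imp)
  have shift: "real (Suc k) * (L ^ Suc k / fact (Suc k) * exp (-L)) = L * (L ^ k / fact k * exp (-L))" for k
    by (simp add: field_simps del: of_nat_Suc)
  show "(\<lambda>k. real (Suc k) * (L ^ Suc k / fact (Suc k) * exp (-L))) sums L"
    unfolding shift using sums_mult[OF poisson_sums[of L], of L] by simp
qed simp

lemma poisson_sums_falling_factorial:
  fixes L :: real
  shows "(\<lambda>k. real k * (real k - 1) * (L ^ k / fact k * exp (-L))) sums L\<^sup>2"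
proof (rule sums_Suc_imp)
  show "(\<lambda>k. real (Suc k) * (real (Suc k) - 1) * (L ^ Suc k / fact (Suc k) * exp (-L))) sums L\<^sup>2"
  proof (rule sums_Suc_imp)
    have shift: "real (Suc (Suc k)) * (real (Suc (Suc k)) - 1) * (L ^ Suc (Suc k) / fact (Suc (Suc k)) * exp (-L))
        = L\<^sup>2 * (L ^ k / fact k * exp (-L))" for k
    proof -
      have "real (Suc (Suc k)) * (real (Suc (Suc k)) - 1) * (L ^ Suc (Suc k) / fact (Suc (Suc k)) * exp (-L))
          = real (Suc (Suc k)) * real (Suc k) * (L * L * L ^ k / (real (Suc (Suc k)) * (real (Suc k) * fact k)) * exp (-L))"
        by simp
      then show ?thesis
        by (simp add: field_simps power2_eq_square del: of_nat_Suc)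
    qed
    show "(\<lambda>k. real (Suc (Suc k)) * (real (Suc (Suc k)) - 1) * (L ^ Suc (Suc k) / fact (Suc (Suc k)) * exp (-L))) sums L\<^sup>2"
      unfolding shift using sums_mult[OF poisson_sums[of L], of "L\<^sup>2"] by simp
  qed simp
qed simp

lemma nn_integral_poisson_sums:
  assumes "0 < L" "\<And>k. 0 \<le> f k" "(\<lambda>k. f k * (L ^ k / fact k * exp (-L))) sums s"
  shows "(\<integral>\<^sup>+N. ennreal (f N) \<partial>measure_pmf (poisson_pmf L)) = ennreal s"
proof -
  have "(\<integral>\<^sup>+N. ennreal (f N) \<partial>measure_pmf (poisson_pmf L))
      = (\<Sum>k. ennreal (f k * (L ^ k / fact k * exp (-L))))"
    unfolding nn_integral_measure_pmf nn_integral_count_space_nat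
    using assms(1,2) by (simp add: ennreal_mult'[symmetric] mult.commute)
  also have "\<dots> = ennreal s"
    using assms by (intro suminf_ennreal_eq) simp_all
  finally show ?thesis .
qed

lemma nn_integral_poisson_of_nat:
  "0 < L \<Longrightarrow> (\<integral>\<^sup>+N. ennreal (real N) \<partial>measure_pmf (poisson_pmf L)) = ennreal L"
  by (rule nn_integral_poisson_sums[OF _ _ poisson_sums_of_nat]) simp_all

lemma nn_integral_poisson_of_nat_square:
  assumes "0 < L"
  shows "(\<integral>\<^sup>+N. ennreal (real N ^ 2) \<partial>measure_pmf (poisson_pmf L)) = ennreal (L + L\<^sup>2)"
proof -
  have "(\<lambda>k. real k * (L ^ k / fact k * exp (-L)) + real k * (real k - 1) * (L ^ k / fact k * exp (-L)))
      sums (L + L\<^sup>2)"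
    by (rule sums_add[OF poisson_sums_of_nat poisson_sums_falling_factorial])
  then have "(\<lambda>k. real k ^ 2 * (L ^ k / fact k * exp (-L))) sums (L + L\<^sup>2)"
    by (simp add: field_simps power2_eq_square)
  then show ?thesis
    using assms by (intro nn_integral_poisson_sums) simp_all
qed

lemma nn_integral_pmf_add:
  assumes "\<And>z. z \<in> set_pmf M \<Longrightarrow> 0 \<le> f z" "\<And>z. z \<in> set_pmf M \<Longrightarrow> 0 \<le> g z"
  shows "(\<integral>\<^sup>+z. ennreal (f z + g z) \<partial>measure_pmf M)
       = (\<integral>\<^sup>+z. ennreal (f z) \<partial>measure_pmf M) + (\<integral>\<^sup>+z. ennreal (g z) \<partial>measure_pmf M)"
proof -
  have "(\<integral>\<^sup>+z. ennreal (f z + g z) \<partial>measure_pmf M) = (\<integral>\<^sup>+z. ennreal (f z) + ennreal (g z) \<partial>measure_pmf M)"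
    using assms by (intro nn_integral_cong_AE) (auto simp: AE_measure_pmf_iff)
  then show ?thesis
    by (simp add: nn_integral_add)
qed

lemma nn_integral_pmf_sum:
  assumes "finite I" "\<And>z i. z \<in> set_pmf M \<Longrightarrow> i \<in> I \<Longrightarrow> 0 \<le> h i z"
  shows "(\<integral>\<^sup>+z. ennreal (\<Sum>i\<in>I. h i z) \<partial>measure_pmf M) = (\<Sum>i\<in>I. \<integral>\<^sup>+z. ennreal (h i z) \<partial>measure_pmf M)"
proof -
  have "(\<integral>\<^sup>+z. ennreal (\<Sum>i\<in>I. h i z) \<partial>measure_pmf M) = (\<integral>\<^sup>+z. (\<Sum>i\<in>I. ennreal (h i z)) \<partial>measure_pmf M)"
    using assms by (intro nn_integral_cong_AE) (auto simp: AE_measure_pmf_iff)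
  then show ?thesis
    by (simp add: nn_integral_sum)
qed

lemma nn_integral_pmf_cmult:
  assumes "0 \<le> c"
  shows "(\<integral>\<^sup>+z. ennreal (c * f z) \<partial>measure_pmf M) = ennreal c * (\<integral>\<^sup>+z. ennreal (f z) \<partial>measure_pmf M)"
  using assms by (simp add: ennreal_mult' nn_integral_cmult)

lemma nn_integral_pmf_add_affine:
  assumes "\<And>z. z \<in> set_pmf M \<Longrightarrow> 0 \<le> f z" "\<And>z. z \<in> set_pmf M \<Longrightarrow> 0 \<le> g z" "0 \<le> a" "0 \<le> b"
  shows "(\<integral>\<^sup>+z. ennreal (f z + (a * g z + b)) \<partial>measure_pmf M)
       = (\<integral>\<^sup>+z. ennreal (f z) \<partial>measure_pmf M) + (ennreal a * (\<integral>\<^sup>+z. ennreal (g z) \<partial>measure_pmf M) + ennreal b)"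
proof -
  have "(\<integral>\<^sup>+z. ennreal (a * g z + b) \<partial>measure_pmf M)
      = (\<integral>\<^sup>+z. ennreal (a * g z) \<partial>measure_pmf M) + (\<integral>\<^sup>+z. ennreal b \<partial>measure_pmf M)"
    using assms(2-4) by (intro nn_integral_pmf_add) auto
  moreover have "(\<integral>\<^sup>+z. ennreal (f z + (a * g z + b)) \<partial>measure_pmf M)
      = (\<integral>\<^sup>+z. ennreal (f z) \<partial>measure_pmf M) + (\<integral>\<^sup>+z. ennreal (a * g z + b) \<partial>measure_pmf M)"
    using assms by (intro nn_integral_pmf_add) auto
  ultimately show ?thesis
    using assms(3) by (simp add: nn_integral_pmf_cmult)
qed

lemma ennreal_sum_of_products:
  fixes a b c d e :: real
  assumes "0 \<le> a" "0 \<le> b" "0 \<le> c" "0 \<le> d" "0 \<le> e"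
  shows "(ennreal a * ennreal b + ennreal c * ennreal d) * ennreal e = ennreal ((a * b + c * d) * e)"
  using assms by (simp add: ennreal_mult ennreal_plus mult_nonneg_nonneg add_nonneg_nonneg)

lemma nn_integral_pmf_mono:
  assumes "\<And>z. z \<in> set_pmf M \<Longrightarrow> f z \<le> g z"
  shows "(\<integral>\<^sup>+z. ennreal (f z) \<partial>measure_pmf M) \<le> (\<integral>\<^sup>+z. ennreal (g z) \<partial>measure_pmf M)"
  using assms by (intro nn_integral_mono_AE) (auto simp: AE_measure_pmf_iff ennreal_leI)

lemma nn_integral_pmf_le_cancel:
  assumes "(\<integral>\<^sup>+z. ennreal (f z + w) \<partial>measure_pmf M) \<le> ennreal (c + w)"
    and "\<And>z. z \<in> set_pmf M \<Longrightarrow> 0 \<le> f z" "0 \<le> w" "0 \<le> c"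
  shows "(\<integral>\<^sup>+z. ennreal (f z) \<partial>measure_pmf M) \<le> ennreal c"
proof -
  have "ennreal w + (\<integral>\<^sup>+z. ennreal (f z) \<partial>measure_pmf M) = (\<integral>\<^sup>+z. ennreal (f z + w) \<partial>measure_pmf M)"
    using assms(2,3) by (subst nn_integral_pmf_add) (auto simp: add.commute)
  also have "\<dots> \<le> ennreal w + ennreal c"
    using assms(1,3,4) by (simp add: ennreal_plus add.commute)
  finally show ?thesis
    by (simp add: ennreal_add_left_cancel_le)
qed

lemma sum_sum_ennreal:
  assumes "\<And>i j. 0 \<le> f i j"
  shows "(\<Sum>i\<in>I. \<Sum>j\<in>J. ennreal (f i j)) = ennreal (\<Sum>i\<in>I. \<Sum>j\<in>J. f i j)"
  using assms by (simp add: sum_ennreal sum_nonneg)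

lemma le_square_div_add:
  fixes a s :: real
  assumes "0 < s"
  shows "a \<le> (a\<^sup>2 / s + s) / 2"
proof -
  have "0 \<le> (a - s)\<^sup>2 / s"
    using assms by simp
  also have "(a - s)\<^sup>2 / s = a\<^sup>2 / s - 2 * a + s"
    using assms by (simp add: field_simps power2_eq_square)
  finally show ?thesis by simp
qed

lemma pos_part_square_le:
  fixes \<beta> b y \<xi> :: real
  assumes "b + \<xi> \<le> y"
  shows "(max 0 (\<beta> - y))\<^sup>2 \<le> (max 0 (\<beta> - b) - \<xi>)\<^sup>2"
proof (cases "\<beta> \<le> y")
  case False
  then have "\<beta> - y \<le> max 0 (\<beta> - b) - \<xi>"
    using assms by linarith
  then show ?thesis
    using False by (intro power_mono) auto
qed simp

lemma div_add_div_le_div: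
  fixes a b Z \<tau> :: real
  assumes "1 < \<tau>" "a \<le> b / \<tau>"
  shows "b / \<tau> + (a - Z) / (\<tau> - 1) \<le> (b - Z) / (\<tau> - 1)"
proof -
  define e where "e = \<tau> - 1"
  have "0 < e"
    using assms(1) by (simp add: e_def)
  have "(b - Z) / e - (b / \<tau> + (a - Z) / e) = ((b - a) * \<tau> - b * e) / (\<tau> * e)"
    using \<open>0 < e\<close> assms(1) by (simp add: field_simps)
  also have "(b - a) * \<tau> - b * e = b - \<tau> * a"
    by (simp add: e_def algebra_simps)
  finally have "(b - Z) / e - (b / \<tau> + (a - Z) / e) = (b - \<tau> * a) / (\<tau> * e)" .
  moreover have "0 \<le> (b - \<tau> * a) / (\<tau> * e)"
    using assms \<open>0 < e\<close> by (simp add: field_simps)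
  ultimately show ?thesis
    unfolding e_def by linarith
qed

lemma inverse_sqrt_le_sqrt_diff:
  fixes a :: real
  assumes "1 \<le> a"
  shows "1 / sqrt a \<le> 2 * sqrt a - 2 * sqrt (a - 1)"
proof -
  have "1 = (sqrt a - sqrt (a - 1)) * (sqrt a + sqrt (a - 1))"
    using assms by (simp add: algebra_simps)
  also have "\<dots> \<le> (sqrt a - sqrt (a - 1)) * (2 * sqrt a)"
    by (intro mult_left_mono) auto
  finally show ?thesis
    using assms by (simp add: field_simps)
qed

lemma sum_inverse_sqrt_le:
  fixes T t :: nat
  assumes "t \<le> T"
  shows "(\<Sum>i<t. 1 / sqrt (real (T - i))) \<le> 2 * sqrt (real T) - 2 * sqrt (real (T - t))"
  using assms
proof (induction t)
  case (Suc t)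
  have "1 / sqrt (real (T - t)) \<le> 2 * sqrt (real (T - t)) - 2 * sqrt (real (T - t) - 1)"
    using Suc.prems by (intro inverse_sqrt_le_sqrt_diff) simp
  moreover have "real (T - Suc t) = real (T - t) - 1"
    using Suc.prems by simp
  ultimately show ?case
    using Suc by (simp only: sum.lessThan_Suc) linarith
qed simp

lemma inverse_add_inverse_square_le:
  fixes \<tau> :: real
  assumes "2 \<le> \<tau>"
  shows "2 / \<tau> + 1 / (\<tau> - 1)\<^sup>2 \<le> 2 / (\<tau> - 1)"
proof -
  have pos: "0 < \<tau> - 1" "0 < \<tau>"
    using assms by auto
  have "\<tau> * (\<tau> - 1) \<le> 2 * (\<tau> - 1)\<^sup>2"
    using mult_nonneg_nonneg[of "\<tau> - 1" "\<tau> - 2"] assms by (simp add: power2_eq_square algebra_simps)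
  then have "1 / (\<tau> - 1)\<^sup>2 \<le> 2 / (\<tau> * (\<tau> - 1))"
    using pos by (simp add: field_simps)
  moreover have "2 / (\<tau> - 1) - 2 / \<tau> = 2 / (\<tau> * (\<tau> - 1))"
    using pos by (simp add: field_simps)
  ultimately show ?thesis
    by linarith
qed

lemma prod_le_factor:
  fixes f :: "'a \<Rightarrow> real"
  assumes "finite S" "l \<in> S" "\<And>i. i \<in> S \<Longrightarrow> 0 \<le> f i \<and> f i \<le> 1"
  shows "prod f S \<le> f l"
proof -
  have "prod f S = f l * prod f (S - {l})"
    using assms by (simp add: prod.remove)
  moreover have "prod f (S - {l}) \<le> 1" "0 \<le> f l"
    using assms by (auto intro: prod_le_1)
  ultimately show ?thesis
    by (simp add: mult_left_le)
qed

section \<open>One period of a randomized acceptance rule\<close>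

text \<open>The analysis of one period follows an augmented state which, besides the remaining
  capacity and the accumulated revenue, counts for every class the arrivals whose acceptance
  coin came up heads (the \<^emph>\<open>attempts\<close>, accepted or not), and counts all arrivals.\<close>

type_synonym ('m, 'n) aug_state = "((('m \<Rightarrow> real) \<times> real) \<times> ('n \<Rightarrow> real)) \<times> nat"

abbreviation base :: "('m, 'n) aug_state \<Rightarrow> ('m \<Rightarrow> real) \<times> real" where
  "base z \<equiv> fst (fst z)"

abbreviation cap :: "('m, 'n) aug_state \<Rightarrow> 'm \<Rightarrow> real" where
  "cap z \<equiv> fst (fst (fst z))"

abbreviation revenue :: "('m, 'n) aug_state \<Rightarrow> real" where
  "revenue z \<equiv> snd (fst (fst z))"

abbreviation attempts :: "('m, 'n) aug_state \<Rightarrow> 'n \<Rightarrow> real" where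
  "attempts z \<equiv> snd (fst z)"

abbreviation arrival_count :: "('m, 'n) aug_state \<Rightarrow> nat" where
  "arrival_count z \<equiv> snd z"

abbreviation aug_init :: "('m \<Rightarrow> real) \<times> real \<Rightarrow> ('m, 'n) aug_state" where
  "aug_init s \<equiv> ((s, \<lambda>_. 0), 0)"

locale nrm =
  fixes lam r :: "'n::finite \<Rightarrow> real" and A :: "'m::finite \<Rightarrow> 'n \<Rightarrow> real"
  assumes lam_pos: "\<And>j. 0 < lam j" and r_nonneg: "\<And>j. 0 \<le> r j" and A_nonneg: "\<And>l j. 0 \<le> A l j"
begin

definition Lam :: real where
  "Lam = (\<Sum>j\<in>UNIV. lam j)"

lemma Lam_pos: "0 < Lam"
  unfolding Lam_def by (rule sum_pos) (auto intro: lam_pos)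

lemma pmf_class_pmf: "pmf (class_pmf lam) j = lam j / Lam"
proof -
  have "(\<Sum>i\<in>UNIV. ennreal (lam i / Lam)) = ennreal (\<Sum>i\<in>UNIV. lam i / Lam)"
    using lam_pos Lam_pos by (intro sum_ennreal) (auto intro: less_imp_le)
  also have "(\<Sum>i\<in>UNIV. lam i / Lam) = 1"
    using Lam_pos by (simp add: sum_divide_distrib[symmetric] Lam_def)
  finally have "(\<integral>\<^sup>+i. ennreal (lam i / Lam) \<partial>count_space UNIV) = 1"
    by (simp add: nn_integral_count_space_finite)
  then show ?thesis
    unfolding class_pmf_def Lam_def[symmetric]
    using lam_pos Lam_pos by (subst pmf_embed_pmf) (auto intro: less_imp_le)
qed

lemma set_pmf_class_pmf: "set_pmf (class_pmf lam) = UNIV"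
  using Lam_pos lam_pos by (auto simp: set_pmf_eq pmf_class_pmf) (metis less_irrefl)

definition aug_step :: "('m, 'n) aug_state \<Rightarrow> 'n \<Rightarrow> bool \<Rightarrow> ('m, 'n) aug_state" where
  "aug_step z i acc =
     ((if acc \<and> (\<forall>l. A l i \<le> cap z l) then ((\<lambda>l. cap z l - A l i), revenue z + r i) else base z,
       if acc then (attempts z)(i := attempts z i + 1) else attempts z),
      Suc (arrival_count z))"

definition aug_arrival :: "('n \<Rightarrow> real) \<Rightarrow> ('m, 'n) aug_state \<Rightarrow> ('m, 'n) aug_state pmf" where
  "aug_arrival x z =
     class_pmf lam \<bind> (\<lambda>i. bernoulli_pmf (x i / lam i) \<bind> (\<lambda>acc. return_pmf (aug_step z i acc)))"

primrec aug_arrivals :: "('n \<Rightarrow> real) \<Rightarrow> nat \<Rightarrow> ('m, 'n) aug_state \<Rightarrow> ('m, 'n) aug_state pmf" where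
  "aug_arrivals x 0 z = return_pmf z"
| "aug_arrivals x (Suc N) z = aug_arrivals x N z \<bind> aug_arrival x"

definition aug_period :: "('n \<Rightarrow> real) \<Rightarrow> ('m \<Rightarrow> real) \<times> real \<Rightarrow> ('m, 'n) aug_state pmf" where
  "aug_period x s = poisson_pmf Lam \<bind> (\<lambda>N. aug_arrivals x N (aug_init s))"

lemma map_aug_arrivals: "map_pmf base (aug_arrivals x N z) = arrivals lam r A x N (base z)"
proof (induction N)
  case (Suc N)
  have "map_pmf base (aug_arrival x w) = arrival lam r A x (base w)" for w
    unfolding aug_arrival_def arrival_def map_bind_pmf by (simp add: aug_step_def)
  then have "map_pmf base (aug_arrivals x (Suc N) z) = map_pmf base (aug_arrivals x N z) \<bind> arrival lam r A x"
    by (simp add: map_bind_pmf bind_map_pmf)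
  then show ?case
    using Suc by simp
qed simp

lemma map_aug_period: "map_pmf base (aug_period x s) = period lam r A x s"
  unfolding aug_period_def period_def Lam_def map_bind_pmf map_aug_arrivals by simp

lemma aug_arrivals_induct:
  assumes "z \<in> set_pmf (aug_arrivals x N y)" "P 0 y"
    and "\<And>n w i acc. P n w \<Longrightarrow> P (Suc n) (aug_step w i acc)"
  shows "P N z"
  using assms(1)
proof (induction N arbitrary: z)
  case (Suc N)
  then obtain w i acc where w: "w \<in> set_pmf (aug_arrivals x N y)" and z: "z = aug_step w i acc"
    by (auto simp: aug_arrival_def)
  show ?case
    unfolding z by (rule assms(3)[OF Suc.IH[OF w]])
qed (use assms(2) in simp)

lemma attempts_nonneg_aug_arrivals:
  assumes "z \<in> set_pmf (aug_arrivals x N y)" "\<And>j. 0 \<le> attempts y j"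
  shows "0 \<le> attempts z j"
proof -
  have "\<forall>j. 0 \<le> attempts z j"
    by (rule aug_arrivals_induct[OF assms(1), where P = "\<lambda>_ w. \<forall>j. 0 \<le> attempts w j"])
      (auto simp: aug_step_def assms(2))
  then show ?thesis ..
qed

lemma attempts_nonneg_aug_period: "z \<in> set_pmf (aug_period x s) \<Longrightarrow> 0 \<le> attempts z j"
  unfolding aug_period_def by (auto intro: attempts_nonneg_aug_arrivals)

lemma nn_integral_aug_arrival:
  assumes "\<And>i. 0 \<le> x i" "\<And>i. x i \<le> lam i" "\<And>z. 0 \<le> f z"
  shows "(\<integral>\<^sup>+z. ennreal (f z) \<partial>measure_pmf (aug_arrival x y)) =
    ennreal ((\<Sum>i\<in>UNIV. f (aug_step y i True) * x i + f (aug_step y i False) * (lam i - x i)) / Lam)"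
proof -
  define p where "p i = x i / lam i" for i
  have p: "0 \<le> p i" "p i \<le> 1" for i
    using assms(1,2)[of i] lam_pos[of i] by (auto simp: p_def field_simps)
  define g where "g i = (f (aug_step y i True) * p i + f (aug_step y i False) * (1 - p i)) * (lam i / Lam)" for i
  have g_nonneg: "0 \<le> g i" for i
    using p[of i] assms(3) lam_pos[of i] Lam_pos unfolding g_def
    by (intro mult_nonneg_nonneg add_nonneg_nonneg divide_nonneg_nonneg) auto
  have class_integral: "(\<integral>\<^sup>+i. h i \<partial>measure_pmf (class_pmf lam)) = (\<Sum>i\<in>UNIV. h i * ennreal (lam i / Lam))" for h
    by (subst nn_integral_measure_pmf_finite) (auto simp: set_pmf_class_pmf pmf_class_pmf)
  have "(\<integral>\<^sup>+z. ennreal (f z) \<partial>measure_pmf (aug_arrival x y))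
      = (\<Sum>i\<in>UNIV. (ennreal (f (aug_step y i True)) * ennreal (p i)
                      + ennreal (f (aug_step y i False)) * ennreal (1 - p i)) * ennreal (lam i / Lam))"
    unfolding aug_arrival_def p_def[symmetric] by (simp add: class_integral p)
  also have "\<dots> = (\<Sum>i\<in>UNIV. ennreal (g i))"
  proof (intro sum.cong refl)
    fix i
    have "0 \<le> f (aug_step y i True)" "0 \<le> f (aug_step y i False)" "0 \<le> 1 - p i" "0 \<le> lam i / Lam"
      using assms(3) p[of i] lam_pos[of i] Lam_pos by auto
    then show "(ennreal (f (aug_step y i True)) * ennreal (p i) + ennreal (f (aug_step y i False)) * ennreal (1 - p i))
        * ennreal (lam i / Lam) = ennreal (g i)"
      unfolding g_def using p(1)[of i] by (intro ennreal_sum_of_products) auto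
  qed
  also have "\<dots> = ennreal (\<Sum>i\<in>UNIV. g i)"
    using g_nonneg by (intro sum_ennreal) auto
  also have "(\<Sum>i\<in>UNIV. g i) = (\<Sum>i\<in>UNIV. f (aug_step y i True) * x i + f (aug_step y i False) * (lam i - x i)) / Lam"
    unfolding sum_divide_distrib
  proof (intro sum.cong refl)
    fix i
    show "g i = (f (aug_step y i True) * x i + f (aug_step y i False) * (lam i - x i)) / Lam"
      using lam_pos[of i] Lam_pos by (simp add: g_def p_def field_simps)
  qed
  finally show ?thesis .
qed

lemma arrival_count_aug_arrivals:
  "z \<in> set_pmf (aug_arrivals x N (aug_init s)) \<Longrightarrow> arrival_count z = N"
  by (erule aug_arrivals_induct[where P = "\<lambda>n w. arrival_count w = n"]) (auto simp: aug_step_def)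

lemma nn_integral_attempts_aug_arrivals:
  assumes "\<And>i. 0 \<le> x i" "\<And>i. x i \<le> lam i" "\<And>j. 0 \<le> attempts y j"
  shows "(\<integral>\<^sup>+z. ennreal (attempts z j) \<partial>measure_pmf (aug_arrivals x N y))
       = ennreal (attempts y j + real N * x j / Lam)"
proof (induction N)
  case (Suc N)
  have nonneg: "\<And>j. 0 \<le> attempts w j" if "w \<in> set_pmf (aug_arrivals x N y)" for w
    using that assms(3) by (rule attempts_nonneg_aug_arrivals)
  have step: "(\<integral>\<^sup>+z. ennreal (attempts z j) \<partial>measure_pmf (aug_arrival x w)) = ennreal (attempts w j + x j / Lam)"
    if "\<And>j. 0 \<le> attempts w j" for w
  proof -
    have "(\<integral>\<^sup>+z. ennreal (max 0 (attempts z j)) \<partial>measure_pmf (aug_arrival x w))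
        = ennreal ((\<Sum>i\<in>UNIV. attempts w j * lam i + (if i = j then x j else 0)) / Lam)"
      using that by (subst nn_integral_aug_arrival[OF assms(1,2)])
        (auto intro!: arg_cong[where f = "\<lambda>u. ennreal (u / Lam)"] sum.cong
          simp: aug_step_def algebra_simps)
    also have "(\<Sum>i\<in>UNIV. attempts w j * lam i + (if i = j then x j else 0)) = attempts w j * Lam + x j"
      by (simp add: sum.distrib sum_distrib_left Lam_def)
    finally show ?thesis
      using Lam_pos by (simp add: field_simps ennreal_max_0)
  qed
  have "(\<integral>\<^sup>+z. ennreal (attempts z j) \<partial>measure_pmf (aug_arrivals x (Suc N) y))
      = (\<integral>\<^sup>+w. ennreal (attempts w j) + ennreal (x j / Lam) \<partial>measure_pmf (aug_arrivals x N y))"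
    using assms(1)[of j] Lam_pos
    by (simp, intro nn_integral_cong_AE) (auto simp: AE_measure_pmf_iff step nonneg ennreal_plus)
  also have "\<dots> = ennreal (attempts y j + real N * x j / Lam) + ennreal (x j / Lam)"
    by (subst nn_integral_add) (auto simp: Suc)
  also have "\<dots> = ennreal (attempts y j + real (Suc N) * x j / Lam)"
    using assms(1,3)[of j] Lam_pos by (subst ennreal_plus[symmetric]) (auto simp: field_simps)
  finally show ?case .
qed simp

lemma nn_integral_attempts_aug_period:
  assumes "\<And>i. 0 \<le> x i" "\<And>i. x i \<le> lam i"
  shows "(\<integral>\<^sup>+z. ennreal (attempts z j) \<partial>measure_pmf (aug_period x s)) = ennreal (x j)"
proof -
  have "(\<integral>\<^sup>+z. ennreal (attempts z j) \<partial>measure_pmf (aug_period x s))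
      = (\<integral>\<^sup>+N. ennreal (real N) * ennreal (x j / Lam) \<partial>measure_pmf (poisson_pmf Lam))"
    unfolding aug_period_def using assms(1)[of j] Lam_pos
    by (simp, intro nn_integral_cong)
      (simp add: nn_integral_attempts_aug_arrivals[OF assms] ennreal_mult[symmetric]
        times_divide_eq_right[symmetric] del: times_divide_eq_right)
  also have "\<dots> = ennreal Lam * ennreal (x j / Lam)"
    by (simp add: nn_integral_multc nn_integral_poisson_of_nat[OF Lam_pos])
  also have "\<dots> = ennreal (x j)"
    using Lam_pos assms(1)[of j] by (simp add: ennreal_mult''[symmetric])
  finally show ?thesis .
qed

lemma nn_integral_arrival_count_square:
  "(\<integral>\<^sup>+z. ennreal (real (arrival_count z) ^ 2) \<partial>measure_pmf (aug_period x s)) = ennreal (Lam + Lam\<^sup>2)"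
proof -
  have "(\<integral>\<^sup>+z. ennreal (real (arrival_count z) ^ 2) \<partial>measure_pmf (aug_arrivals x N (aug_init s)))
      = ennreal (real N ^ 2)" for N
    by (subst nn_integral_cong_AE[where v = "\<lambda>_. ennreal (real N ^ 2)"])
      (auto simp: AE_measure_pmf_iff dest: arrival_count_aug_arrivals)
  then show ?thesis
    unfolding aug_period_def by (simp add: nn_integral_poisson_of_nat_square[OF Lam_pos])
qed

definition load :: "('n \<Rightarrow> real) \<Rightarrow> 'm \<Rightarrow> real" where
  "load n l = (\<Sum>j\<in>UNIV. A l j * n j)"

lemma load_nonneg: "(\<And>j. 0 \<le> n j) \<Longrightarrow> 0 \<le> load n l"
  unfolding load_def by (intro sum_nonneg mult_nonneg_nonneg) (auto simp: A_nonneg)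

lemma load_mono: "(\<And>j. n j \<le> n' j) \<Longrightarrow> load n l \<le> load n' l"
  unfolding load_def by (intro sum_mono mult_left_mono) (auto intro: A_nonneg)

lemma weighted_sum_upd:
  fixes g n :: "'n \<Rightarrow> real"
  shows "(\<Sum>j\<in>UNIV. g j * (n(i := n i + 1)) j) = (\<Sum>j\<in>UNIV. g j * n j) + g i"
proof -
  have "(\<Sum>j\<in>UNIV. g j * (n(i := n i + 1)) j) = (\<Sum>j\<in>UNIV. g j * n j + (if j = i then g i else 0))"
    by (intro sum.cong) (auto simp: algebra_simps)
  then show ?thesis
    by (simp add: sum.distrib)
qed

lemma load_upd: "load (n(i := n i + 1)) l = load n l + A l i"
  unfolding load_def by (rule weighted_sum_upd)

lemma nn_integral_weighted_attempts:
  assumes "\<And>i. 0 \<le> x i" "\<And>i. x i \<le> lam i" "\<And>j. 0 \<le> g j"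
  shows "(\<integral>\<^sup>+z. ennreal (\<Sum>j\<in>UNIV. g j * attempts z j) \<partial>measure_pmf (aug_period x s))
       = ennreal (\<Sum>j\<in>UNIV. g j * x j)"
proof -
  have "(\<integral>\<^sup>+z. ennreal (\<Sum>j\<in>UNIV. g j * attempts z j) \<partial>measure_pmf (aug_period x s))
      = (\<Sum>j\<in>UNIV. ennreal (g j) * (\<integral>\<^sup>+z. ennreal (attempts z j) \<partial>measure_pmf (aug_period x s)))"
  proof (subst nn_integral_pmf_sum)
    show "0 \<le> g j * attempts z j" if "z \<in> set_pmf (aug_period x s)" for z j
      using assms(3)[of j] attempts_nonneg_aug_period[OF that, of j] by simp
  qed (auto intro!: sum.cong nn_integral_pmf_cmult assms(3))
  also have "\<dots> = ennreal (\<Sum>j\<in>UNIV. g j * x j)"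
    using assms by (subst sum_ennreal[symmetric])
      (auto simp: nn_integral_attempts_aug_period ennreal_mult)
  finally show ?thesis .
qed

lemma nn_integral_load_aug_period:
  assumes "\<And>i. 0 \<le> x i" "\<And>i. x i \<le> lam i"
  shows "(\<integral>\<^sup>+z. ennreal (load (attempts z) l) \<partial>measure_pmf (aug_period x s)) = ennreal (load x l)"
  unfolding load_def using assms A_nonneg by (rule nn_integral_weighted_attempts)

text \<open>A class is blockable once its attempts so far could have exhausted one of the resources
  it needs.  Until then every attempt of the class has been accepted, which is the lower revenue
  bound in the invariant.\<close>

definition blockable :: "('m \<Rightarrow> real) \<Rightarrow> ('n \<Rightarrow> real) \<Rightarrow> 'n \<Rightarrow> bool" where
  "blockable c n j \<longleftrightarrow> (\<exists>l. 0 < A l j \<and> c l - A l j < load n l)"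

definition period_inv :: "('m \<Rightarrow> real) \<Rightarrow> real \<Rightarrow> ('m, 'n) aug_state \<Rightarrow> bool" where
  "period_inv c R0 z \<longleftrightarrow>
     (\<forall>j. 0 \<le> attempts z j) \<and> (\<Sum>j\<in>UNIV. attempts z j) \<le> real (arrival_count z) \<and>
     (\<forall>l. 0 \<le> cap z l) \<and> (\<forall>l. c l - load (attempts z) l \<le> cap z l) \<and>
     revenue z \<le> R0 + (\<Sum>j\<in>UNIV. r j * attempts z j) \<and>
     R0 + (\<Sum>j\<in>UNIV. if blockable c (attempts z) j then 0 else r j * attempts z j) \<le> revenue z"

lemma blockable_mono: "(\<And>j. n j \<le> n' j) \<Longrightarrow> blockable c n j \<Longrightarrow> blockable c n' j"
  unfolding blockable_def using load_mono by (meson less_le_trans)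

lemma unblocked_revenue_upd:
  fixes n :: "'n \<Rightarrow> real" and i :: 'n
  assumes "\<And>j. 0 \<le> n j"
  defines "n' \<equiv> n(i := n i + 1)"
  shows "(\<Sum>j\<in>UNIV. if blockable c n' j then 0 else r j * n' j)
       \<le> (\<Sum>j\<in>UNIV. if blockable c n j then 0 else r j * n j) + (if blockable c n' i then 0 else r i)"
proof -
  have "(\<Sum>j\<in>UNIV. if blockable c n' j then 0 else r j * n' j)
      \<le> (\<Sum>j\<in>UNIV. (if blockable c n j then 0 else r j * n j) + (if j = i then if blockable c n' i then 0 else r i else 0))"
  proof (rule sum_mono)
    fix j
    have "blockable c n j \<Longrightarrow> blockable c n' j"
      by (rule blockable_mono) (auto simp: n'_def)
    then show "(if blockable c n' j then 0 else r j * n' j)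
        \<le> (if blockable c n j then 0 else r j * n j) + (if j = i then if blockable c n' i then 0 else r i else 0)"
      using r_nonneg[of j] assms(1)[of j] by (auto simp: n'_def algebra_simps)
  qed
  then show ?thesis
    by (simp add: sum.distrib)
qed

lemma blockable_upd_of_overflow:
  assumes "period_inv c R0 z" "cap z l < A l i"
  shows "blockable c ((attempts z)(i := attempts z i + 1)) i"
  unfolding blockable_def
proof (intro exI conjI)
  have "0 \<le> cap z l" "c l - load (attempts z) l \<le> cap z l"
    using assms(1) by (auto simp: period_inv_def)
  then show "0 < A l i" "c l - A l i < load ((attempts z)(i := attempts z i + 1)) l"
    using assms(2) A_nonneg[of l i] by (auto simp: load_upd)
qed

lemma period_inv_aug_step:
  assumes inv: "period_inv c R0 z"
  shows "period_inv c R0 (aug_step z i acc)"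
proof (cases acc)
  case False
  then show ?thesis
    using inv by (simp add: period_inv_def aug_step_def cong: if_cong)
next
  case True
  define n where "n = attempts z"
  define n' where "n' = n(i := n i + 1)"
  have n_nonneg: "\<And>j. 0 \<le> n j" and count: "(\<Sum>j\<in>UNIV. n j) \<le> real (arrival_count z)"
    and cap_nonneg: "\<And>l. 0 \<le> cap z l" and cap_lower: "\<And>l. c l - load n l \<le> cap z l"
    and rev_upper: "revenue z \<le> R0 + (\<Sum>j\<in>UNIV. r j * n j)"
    and rev_lower: "R0 + (\<Sum>j\<in>UNIV. if blockable c n j then 0 else r j * n j) \<le> revenue z"
    using inv by (auto simp: period_inv_def n_def cong: if_cong)
  have n'_nonneg: "\<And>j. 0 \<le> n' j"
    using n_nonneg by (simp add: n'_def add_nonneg_nonneg)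
  have count': "(\<Sum>j\<in>UNIV. n' j) \<le> real (Suc (arrival_count z))"
    using weighted_sum_upd[of "\<lambda>_. 1" n i] count by (simp add: n'_def)
  have load': "\<And>l. load n' l = load n l + A l i"
    by (simp add: n'_def load_upd)
  have rev': "(\<Sum>j\<in>UNIV. r j * n' j) = (\<Sum>j\<in>UNIV. r j * n j) + r i"
    unfolding n'_def by (rule weighted_sum_upd)
  have unblocked: "(\<Sum>j\<in>UNIV. if blockable c n' j then 0 else r j * n' j)
      \<le> (\<Sum>j\<in>UNIV. if blockable c n j then 0 else r j * n j) + (if blockable c n' i then 0 else r i)"
    unfolding n'_def by (rule unblocked_revenue_upd[OF n_nonneg])
  have step: "aug_step z i acc = (if \<forall>l. A l i \<le> cap z l
      then ((((\<lambda>l. cap z l - A l i), revenue z + r i), n'), Suc (arrival_count z))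
      else ((base z, n'), Suc (arrival_count z)))"
    using True by (simp add: aug_step_def n'_def n_def)
  show ?thesis
  proof (cases "\<forall>l. A l i \<le> cap z l")
    case fits: True
    have "c l - load n' l \<le> cap z l - A l i" for l
      using cap_lower[of l] load'[of l] by simp
    moreover have "R0 + (\<Sum>j\<in>UNIV. if blockable c n' j then 0 else r j * n' j) \<le> revenue z + r i"
      using unblocked rev_lower r_nonneg[of i] by (auto split: if_splits)
    ultimately show ?thesis
      using fits n'_nonneg count' rev_upper rev' unfolding step period_inv_def by (auto cong: if_cong)
  next
    case False
    then obtain l0 where l0: "cap z l0 < A l0 i"
      by (auto simp: not_le)
    have "blockable c n' i"
      unfolding n'_def n_def using inv l0 by (rule blockable_upd_of_overflow)
    moreover have "c l - load n' l \<le> cap z l" for l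
      using cap_lower[of l] load'[of l] A_nonneg[of l i] by simp
    ultimately show ?thesis
      using False n'_nonneg count' cap_nonneg rev_upper rev' unblocked rev_lower r_nonneg[of i]
      unfolding step period_inv_def by (auto cong: if_cong)
  qed
qed

lemma period_inv_aug_period:
  assumes "\<And>l. 0 \<le> c l" "z \<in> set_pmf (aug_period x (c, R0))"
  shows "period_inv c R0 z"
proof -
  obtain N where "z \<in> set_pmf (aug_arrivals x N (aug_init (c, R0)))"
    using assms(2) by (auto simp: aug_period_def)
  then show ?thesis
  proof (rule aug_arrivals_induct[where P = "\<lambda>_. period_inv c R0"])
    show "period_inv c R0 (aug_init (c, R0))"
      using assms(1) by (simp add: period_inv_def load_def cong: if_cong)
  qed (rule period_inv_aug_step)
qed

lemma revenue_nonneg_period_inv: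
  assumes "period_inv c R0 z" "0 \<le> R0"
  shows "0 \<le> revenue z"
proof -
  have "0 \<le> (\<Sum>j\<in>UNIV. if blockable c (attempts z) j then 0 else r j * attempts z j)"
    using assms(1) by (intro sum_nonneg) (auto simp: period_inv_def r_nonneg)
  then show ?thesis
    using assms by (auto simp: period_inv_def)
qed

lemma nn_integral_attempt_revenue:
  assumes "0 \<le> R0" "\<And>i. 0 \<le> x i" "\<And>i. x i \<le> lam i"
  shows "(\<integral>\<^sup>+z. ennreal (R0 + (\<Sum>j\<in>UNIV. r j * attempts z j)) \<partial>measure_pmf (aug_period x s))
       = ennreal (R0 + (\<Sum>j\<in>UNIV. r j * x j))"
proof -
  have "(\<integral>\<^sup>+z. ennreal (R0 + (\<Sum>j\<in>UNIV. r j * attempts z j)) \<partial>measure_pmf (aug_period x s))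
      = ennreal R0 + ennreal (\<Sum>j\<in>UNIV. r j * x j)"
  proof (subst nn_integral_pmf_add)
    show "0 \<le> (\<Sum>j\<in>UNIV. r j * attempts z j)" if "z \<in> set_pmf (aug_period x s)" for z
      using attempts_nonneg_aug_period[OF that] r_nonneg by (intro sum_nonneg mult_nonneg_nonneg) auto
  qed (use assms r_nonneg in \<open>auto simp: nn_integral_weighted_attempts\<close>)
  then show ?thesis
    using assms r_nonneg by (simp add: ennreal_plus sum_nonneg mult_nonneg_nonneg)
qed

lemma nn_integral_count_square_load:
  assumes "\<And>i. 0 \<le> x i" "\<And>i. x i \<le> lam i" "0 \<le> a" "0 \<le> b"
  shows "(\<integral>\<^sup>+z. ennreal (a * real (arrival_count z) ^ 2 + b * load (attempts z) l) \<partial>measure_pmf (aug_period x s))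
       = ennreal (a * (Lam + Lam\<^sup>2) + b * load x l)"
proof -
  have "(\<integral>\<^sup>+z. ennreal (a * real (arrival_count z) ^ 2 + b * load (attempts z) l) \<partial>measure_pmf (aug_period x s))
      = ennreal a * ennreal (Lam + Lam\<^sup>2) + ennreal b * ennreal (load x l)"
  proof (subst nn_integral_pmf_add)
    show "0 \<le> b * load (attempts z) l" if "z \<in> set_pmf (aug_period x s)" for z
      using attempts_nonneg_aug_period[OF that] assms(4) by (intro mult_nonneg_nonneg load_nonneg) auto
  qed (use assms in \<open>auto simp: nn_integral_pmf_cmult nn_integral_arrival_count_square
      nn_integral_load_aug_period\<close>)
  then show ?thesis
    using assms Lam_pos load_nonneg[of x l]
    by (simp add: ennreal_mult ennreal_plus add_nonneg_nonneg)
qed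

lemma period_revenue_upper:
  assumes "\<And>l. 0 \<le> c l" "0 \<le> R0" "\<And>i. 0 \<le> x i" "\<And>i. x i \<le> lam i"
  shows "(\<integral>\<^sup>+z. ennreal (revenue z) \<partial>measure_pmf (aug_period x (c, R0))) \<le> ennreal (R0 + (\<Sum>j\<in>UNIV. r j * x j))"
proof -
  have "(\<integral>\<^sup>+z. ennreal (revenue z) \<partial>measure_pmf (aug_period x (c, R0)))
      \<le> (\<integral>\<^sup>+z. ennreal (R0 + (\<Sum>j\<in>UNIV. r j * attempts z j)) \<partial>measure_pmf (aug_period x (c, R0)))"
    by (rule nn_integral_pmf_mono) (auto dest!: period_inv_aug_period[OF assms(1)] simp: period_inv_def)
  then show ?thesis
    by (simp add: nn_integral_attempt_revenue assms(2-4))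
qed

text \<open>An upper bound for the attempts of a class that resource \<open>l\<close> can block, whose expectation
  is \<open>O(1 / sqrt \<tau>)\<close> when \<open>x\<close> is feasible for the right-hand side \<open>c / \<tau>\<close>: for a large
  resource it is the AM-GM bound with weight \<open>sqrt \<tau>\<close>, while a small resource forces
  \<open>x j \<le> 2 / \<tau>\<close>.\<close>

definition blocked_bound :: "('m \<Rightarrow> real) \<Rightarrow> real \<Rightarrow> 'n \<Rightarrow> 'm \<Rightarrow> ('m, 'n) aug_state \<Rightarrow> real" where
  "blocked_bound c \<tau> j l z =
     (if A l j = 0 then 0
      else if 2 * A l j \<le> c l
      then 1 / (2 * sqrt \<tau>) * real (arrival_count z) ^ 2 + sqrt \<tau> / c l * load (attempts z) l
      else attempts z j)"

definition blocked_const :: real where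
  "blocked_const = (Lam + Lam\<^sup>2) / 2 + 2"

lemma blocked_bound_nonneg:
  assumes "0 < \<tau>" "\<And>j. 0 \<le> attempts z j"
  shows "0 \<le> blocked_bound c \<tau> j l z"
  using assms load_nonneg[of "attempts z" l] A_nonneg[of l j]
  unfolding blocked_bound_def by (auto intro!: add_nonneg_nonneg mult_nonneg_nonneg divide_nonneg_nonneg)

lemma attempts_le_blocked_bound:
  assumes inv: "period_inv c R0 z" and "0 < \<tau>"
    and l: "0 < A l j" "c l - A l j < load (attempts z) l"
  shows "attempts z j \<le> blocked_bound c \<tau> j l z"
proof (cases "2 * A l j \<le> c l")
  case True
  define n k where "n = attempts z" and "k = real (arrival_count z)"
  have "n j \<le> (\<Sum>j\<in>UNIV. n j)" "(\<Sum>j\<in>UNIV. n j) \<le> k" "\<And>j. 0 \<le> n j"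
    using inv by (auto simp: period_inv_def n_def k_def intro: member_le_sum)
  then have "(n j)\<^sup>2 \<le> k\<^sup>2"
    by (intro power_mono) auto
  then have square: "(n j)\<^sup>2 / sqrt \<tau> \<le> k\<^sup>2 / sqrt \<tau>"
    using \<open>0 < \<tau>\<close> by (simp add: divide_right_mono)
  have "0 < c l"
    using True l by simp
  then have "1 \<le> 2 * load n l / c l"
    using True l by (simp add: field_simps n_def)
  then have linear: "sqrt \<tau> \<le> sqrt \<tau> * (2 * load n l / c l)"
    using mult_left_mono[of 1 "2 * load n l / c l" "sqrt \<tau>"] \<open>0 < \<tau>\<close> by simp
  have "n j \<le> ((n j)\<^sup>2 / sqrt \<tau> + sqrt \<tau>) / 2"
    using \<open>0 < \<tau>\<close> by (intro le_square_div_add) simp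
  also have "\<dots> \<le> (k\<^sup>2 / sqrt \<tau> + sqrt \<tau> * (2 * load n l / c l)) / 2"
    by (rule divide_right_mono[OF add_mono[OF square linear]]) simp
  also have "\<dots> = blocked_bound c \<tau> j l z"
    using True l \<open>0 < c l\<close> by (simp add: blocked_bound_def n_def k_def field_simps)
  finally show ?thesis
    by (simp add: n_def)
qed (use l in \<open>simp add: blocked_bound_def\<close>)

lemma attempt_revenue_le_revenue_blocked_bound:
  assumes inv: "period_inv c R0 z" and "0 < \<tau>"
  shows "R0 + (\<Sum>j\<in>UNIV. r j * attempts z j)
       \<le> revenue z + (\<Sum>j\<in>UNIV. \<Sum>l\<in>UNIV. r j * blocked_bound c \<tau> j l z)"
proof -
  have nonneg: "\<And>j. 0 \<le> attempts z j"
    using inv by (simp add: period_inv_def)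
  have "r j * attempts z j
      \<le> (if blockable c (attempts z) j then 0 else r j * attempts z j) + (\<Sum>l\<in>UNIV. r j * blocked_bound c \<tau> j l z)"
    for j
  proof (cases "blockable c (attempts z) j")
    case True
    then obtain l where l: "0 < A l j" "c l - A l j < load (attempts z) l"
      unfolding blockable_def by blast
    have "attempts z j \<le> blocked_bound c \<tau> j l z"
      using inv \<open>0 < \<tau>\<close> l by (rule attempts_le_blocked_bound)
    also have "\<dots> \<le> (\<Sum>l\<in>UNIV. blocked_bound c \<tau> j l z)"
      using blocked_bound_nonneg[OF \<open>0 < \<tau>\<close> nonneg] by (intro member_le_sum) auto
    finally show ?thesis
      using True r_nonneg[of j] by (simp add: sum_distrib_left[symmetric] mult_left_mono)
  qed (use blocked_bound_nonneg[OF \<open>0 < \<tau>\<close> nonneg] r_nonneg in \<open>auto intro!: sum_nonneg\<close>)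
  then have "R0 + (\<Sum>j\<in>UNIV. r j * attempts z j)
      \<le> R0 + (\<Sum>j\<in>UNIV. if blockable c (attempts z) j then 0 else r j * attempts z j)
           + (\<Sum>j\<in>UNIV. \<Sum>l\<in>UNIV. r j * blocked_bound c \<tau> j l z)"
    by (simp add: sum.distrib[symmetric] sum_mono)
  then show ?thesis
    using inv by (auto simp: period_inv_def)
qed

lemma nn_integral_blocked_bound_large:
  assumes "1 \<le> \<tau>" "\<And>i. 0 \<le> x i" "\<And>i. x i \<le> lam i" "load x l \<le> c l / \<tau>"
    and "0 < A l j" "2 * A l j \<le> c l"
  shows "(\<integral>\<^sup>+z. ennreal (blocked_bound c \<tau> j l z) \<partial>measure_pmf (aug_period x s))
       \<le> ennreal (blocked_const / sqrt \<tau>)"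
proof -
  have "0 < sqrt \<tau>" "0 < c l"
    using assms by auto
  have "sqrt \<tau> / c l * load x l \<le> sqrt \<tau> / c l * (c l / \<tau>)"
    using assms(4) \<open>0 < c l\<close> \<open>0 < sqrt \<tau>\<close> by (intro mult_left_mono) auto
  also have "\<dots> = 1 / sqrt \<tau>"
    using \<open>0 < c l\<close> \<open>1 \<le> \<tau>\<close> by (simp add: field_simps)
  also have "\<dots> \<le> 2 / sqrt \<tau>"
    using \<open>0 < sqrt \<tau>\<close> by (simp add: divide_right_mono)
  finally have bound: "1 / (2 * sqrt \<tau>) * (Lam + Lam\<^sup>2) + sqrt \<tau> / c l * load x l \<le> blocked_const / sqrt \<tau>"
    using \<open>0 < sqrt \<tau>\<close> by (simp add: blocked_const_def add_divide_distrib)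
  have "blocked_bound c \<tau> j l
      = (\<lambda>z. 1 / (2 * sqrt \<tau>) * real (arrival_count z) ^ 2 + sqrt \<tau> / c l * load (attempts z) l)"
    using assms(5,6) by (simp add: blocked_bound_def fun_eq_iff)
  then have "(\<integral>\<^sup>+z. ennreal (blocked_bound c \<tau> j l z) \<partial>measure_pmf (aug_period x s))
      = ennreal (1 / (2 * sqrt \<tau>) * (Lam + Lam\<^sup>2) + sqrt \<tau> / c l * load x l)"
    using \<open>0 < sqrt \<tau>\<close> \<open>0 < c l\<close> assms(2,3) by (simp only:) (rule nn_integral_count_square_load, auto)
  then show ?thesis
    using bound by (simp only: ennreal_leI)
qed

lemma nn_integral_blocked_bound_small:
  assumes "1 \<le> \<tau>" "\<And>i. 0 \<le> x i" "\<And>i. x i \<le> lam i" "load x l \<le> c l / \<tau>"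
    and "0 < A l j" "c l < 2 * A l j"
  shows "(\<integral>\<^sup>+z. ennreal (blocked_bound c \<tau> j l z) \<partial>measure_pmf (aug_period x s))
       \<le> ennreal (blocked_const / sqrt \<tau>)"
proof -
  have "0 < sqrt \<tau>" "1 \<le> sqrt \<tau>"
    using assms(1) by auto
  have "A l j * x j \<le> load x l"
    unfolding load_def using A_nonneg assms(2)
    by (intro member_le_sum[where f = "\<lambda>j. A l j * x j"]) (auto intro: mult_nonneg_nonneg)
  also have "\<dots> \<le> 2 * A l j / \<tau>"
    using assms(1,4,6) by (smt (verit) divide_right_mono)
  finally have "x j \<le> 2 / \<tau>"
    using assms(1,5) by (simp add: field_simps)
  also have "\<dots> \<le> 2 / sqrt \<tau>"
    using mult_left_mono[of 1 "sqrt \<tau>" "sqrt \<tau>"] \<open>1 \<le> sqrt \<tau>\<close> assms(1)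
    by (intro divide_left_mono) auto
  also have "\<dots> \<le> blocked_const / sqrt \<tau>"
    using Lam_pos \<open>0 < sqrt \<tau>\<close> unfolding blocked_const_def by (intro divide_right_mono) auto
  finally show ?thesis
    using assms(5,6) by (simp add: blocked_bound_def nn_integral_attempts_aug_period assms(2,3) ennreal_leI)
qed

lemma nn_integral_blocked_bound:
  assumes "1 \<le> \<tau>" "\<And>i. 0 \<le> x i" "\<And>i. x i \<le> lam i" "\<And>l. load x l \<le> c l / \<tau>"
  shows "(\<integral>\<^sup>+z. ennreal (blocked_bound c \<tau> j l z) \<partial>measure_pmf (aug_period x s))
       \<le> ennreal (blocked_const / sqrt \<tau>)"
proof -
  consider "A l j = 0" | "0 < A l j" "2 * A l j \<le> c l" | "0 < A l j" "c l < 2 * A l j"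
    using A_nonneg[of l j] by fastforce
  then show ?thesis
    using nn_integral_blocked_bound_large[where c = c and l = l, OF assms(1-3) assms(4)[of l]]
      nn_integral_blocked_bound_small[where c = c and l = l, OF assms(1-3) assms(4)[of l]]
    by cases (simp_all add: blocked_bound_def)
qed

definition blocking_const :: real where
  "blocking_const = (\<Sum>j\<in>UNIV. r j) * real CARD('m) * blocked_const"

lemma blocking_const_nonneg: "0 \<le> blocking_const"
  unfolding blocking_const_def blocked_const_def using r_nonneg Lam_pos
  by (auto intro!: mult_nonneg_nonneg sum_nonneg)

lemma nn_integral_weighted_blocked_bound:
  assumes "\<And>l. 0 \<le> c l" "1 \<le> \<tau>" "\<And>i. 0 \<le> x i" "\<And>i. x i \<le> lam i"
    and "\<And>l. load x l \<le> c l / \<tau>"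
  shows "(\<integral>\<^sup>+z. ennreal (\<Sum>j\<in>UNIV. \<Sum>l\<in>UNIV. r j * blocked_bound c \<tau> j l z) \<partial>measure_pmf (aug_period x (c, R0)))
       \<le> ennreal (blocking_const / sqrt \<tau>)"
proof -
  let ?M = "measure_pmf (aug_period x (c, R0))"
  define K where "K = blocked_const / sqrt \<tau>"
  have "0 \<le> K"
    unfolding K_def blocked_const_def using Lam_pos assms(2) by simp
  have "0 \<le> r j * blocked_bound c \<tau> j l z" if "z \<in> set_pmf (aug_period x (c, R0))" for z j l
    using period_inv_aug_period[OF assms(1) that] assms(2) r_nonneg[of j]
    by (intro mult_nonneg_nonneg blocked_bound_nonneg) (auto simp: period_inv_def)
  then have "(\<integral>\<^sup>+z. ennreal (\<Sum>j\<in>UNIV. \<Sum>l\<in>UNIV. r j * blocked_bound c \<tau> j l z) \<partial>?M)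
      = (\<Sum>j\<in>UNIV. \<Sum>l\<in>UNIV. ennreal (r j) * (\<integral>\<^sup>+z. ennreal (blocked_bound c \<tau> j l z) \<partial>?M))"
    by (simp add: nn_integral_pmf_sum nn_integral_pmf_cmult r_nonneg sum_nonneg)
  also have "\<dots> \<le> (\<Sum>j\<in>UNIV. \<Sum>l\<in>(UNIV :: 'm set). ennreal (r j * K))"
  proof (intro sum_mono)
    fix j l
    have "ennreal (r j) * (\<integral>\<^sup>+z. ennreal (blocked_bound c \<tau> j l z) \<partial>?M) \<le> ennreal (r j) * ennreal K"
      unfolding K_def by (intro mult_left_mono nn_integral_blocked_bound assms) auto
    then show "ennreal (r j) * (\<integral>\<^sup>+z. ennreal (blocked_bound c \<tau> j l z) \<partial>?M) \<le> ennreal (r j * K)"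
      using \<open>0 \<le> K\<close> r_nonneg[of j] by (simp only: ennreal_mult)
  qed
  also have "\<dots> = ennreal (\<Sum>j\<in>UNIV. \<Sum>l\<in>(UNIV :: 'm set). r j * K)"
    using \<open>0 \<le> K\<close> r_nonneg by (intro sum_sum_ennreal mult_nonneg_nonneg)
  also have "(\<Sum>j\<in>UNIV. \<Sum>l\<in>(UNIV :: 'm set). r j * K) = (\<Sum>j\<in>UNIV. r j) * real CARD('m) * K"
    by (simp add: sum_distrib_left sum_distrib_right mult_ac)
  finally show ?thesis
    by (simp add: K_def blocking_const_def)
qed

lemma period_revenue_lower:
  assumes "\<And>l. 0 \<le> c l" "0 \<le> R0" "1 \<le> \<tau>" "\<And>i. 0 \<le> x i" "\<And>i. x i \<le> lam i"
    and "\<And>l. load x l \<le> c l / \<tau>"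
  shows "ennreal (R0 + (\<Sum>j\<in>UNIV. r j * x j))
       \<le> (\<integral>\<^sup>+z. ennreal (revenue z) \<partial>measure_pmf (aug_period x (c, R0))) + ennreal (blocking_const / sqrt \<tau>)"
proof -
  let ?M = "measure_pmf (aug_period x (c, R0))"
  let ?loss = "\<lambda>z. \<Sum>j\<in>UNIV. \<Sum>l\<in>UNIV. r j * blocked_bound c \<tau> j l z"
  have inv: "\<And>z. z \<in> set_pmf (aug_period x (c, R0)) \<Longrightarrow> period_inv c R0 z"
    by (rule period_inv_aug_period[OF assms(1)])
  have "ennreal (R0 + (\<Sum>j\<in>UNIV. r j * x j)) = (\<integral>\<^sup>+z. ennreal (R0 + (\<Sum>j\<in>UNIV. r j * attempts z j)) \<partial>?M)"
    by (simp add: nn_integral_attempt_revenue assms(2,4,5))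
  also have "\<dots> \<le> (\<integral>\<^sup>+z. ennreal (revenue z + ?loss z) \<partial>?M)"
    using assms(3) by (intro nn_integral_pmf_mono attempt_revenue_le_revenue_blocked_bound inv) auto
  also have "\<dots> = (\<integral>\<^sup>+z. ennreal (revenue z) \<partial>?M) + (\<integral>\<^sup>+z. ennreal (?loss z) \<partial>?M)"
  proof (rule nn_integral_pmf_add)
    show "0 \<le> ?loss z" if "z \<in> set_pmf (aug_period x (c, R0))" for z
      using inv[OF that] assms(3) r_nonneg
      by (intro sum_nonneg mult_nonneg_nonneg blocked_bound_nonneg) (auto simp: period_inv_def)
  qed (use revenue_nonneg_period_inv[OF inv assms(2)] in simp)
  also have "\<dots> \<le> (\<integral>\<^sup>+z. ennreal (revenue z) \<partial>?M) + ennreal (blocking_const / sqrt \<tau>)"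
    using assms by (intro add_left_mono nn_integral_weighted_blocked_bound)
  finally show ?thesis .
qed

definition Asum :: real where
  "Asum = (\<Sum>l\<in>UNIV. \<Sum>j\<in>UNIV. A l j)"

definition deficit_const :: real where
  "deficit_const = 2 * (Asum * Lam)\<^sup>2 + 2 * Asum\<^sup>2 * (Lam + Lam\<^sup>2)"

lemma Asum_nonneg: "0 \<le> Asum"
  unfolding Asum_def by (intro sum_nonneg) (auto simp: A_nonneg)

lemma deficit_const_nonneg: "0 \<le> deficit_const"
  unfolding deficit_const_def using Lam_pos Asum_nonneg by simp

lemma A_le_Asum: "A l j \<le> Asum"
proof -
  have "A l j \<le> (\<Sum>j\<in>UNIV. A l j)"
    by (rule member_le_sum) (auto simp: A_nonneg)
  also have "\<dots> \<le> Asum"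
    unfolding Asum_def by (rule member_le_sum) (auto intro: sum_nonneg A_nonneg)
  finally show ?thesis .
qed

lemma load_le_Asum_sum:
  assumes "\<And>j. 0 \<le> n j"
  shows "load n l \<le> Asum * (\<Sum>j\<in>UNIV. n j)"
  unfolding load_def sum_distrib_left using assms by (intro sum_mono mult_right_mono A_le_Asum)

lemma load_le_Asum_arrival_count:
  assumes "period_inv c R0 z"
  shows "load (attempts z) l \<le> Asum * real (arrival_count z)"
proof -
  have "\<And>j. 0 \<le> attempts z j" "(\<Sum>j\<in>UNIV. attempts z j) \<le> real (arrival_count z)"
    using assms by (auto simp: period_inv_def)
  then show ?thesis
    using load_le_Asum_sum Asum_nonneg by (meson mult_left_mono order_trans)
qed

lemma deficit_const_ge:
  assumes "0 \<le> a" "a \<le> Asum * Lam"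
  shows "2 * a\<^sup>2 / e\<^sup>2 + 2 * Asum\<^sup>2 / e\<^sup>2 * (Lam + Lam\<^sup>2) \<le> deficit_const / e\<^sup>2"
proof -
  have "a\<^sup>2 \<le> (Asum * Lam)\<^sup>2"
    using assms by (intro power_mono) auto
  then have "2 * a\<^sup>2 / e\<^sup>2 \<le> 2 * (Asum * Lam)\<^sup>2 / e\<^sup>2"
    by (intro divide_right_mono) auto
  then show ?thesis
    by (simp add: deficit_const_def add_divide_distrib)
qed

lemma load_le_Asum_Lam:
  assumes "\<And>i. 0 \<le> x i" "\<And>i. x i \<le> lam i"
  shows "load x l \<le> Asum * Lam"
proof -
  have "load x l \<le> Asum * (\<Sum>j\<in>UNIV. x j)"
    using assms(1) by (rule load_le_Asum_sum)
  also have "\<dots> \<le> Asum * Lam"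
    unfolding Lam_def using assms Asum_nonneg by (intro mult_left_mono sum_mono) auto
  finally show ?thesis .
qed

text \<open>With \<open>\<xi> = (a - load) / (\<tau> - 1)\<close> the new right-hand side is at least \<open>c l / \<tau> + \<xi>\<close>, and
  \<open>\<xi>\<close> has mean zero.  The cross term \<open>-2 d \<xi>\<close> is moved to the left so that all terms are
  nonnegative and can be integrated in \<open>ennreal\<close>.\<close>

lemma deficit_pointwise:
  fixes \<beta> \<tau> a :: real
  assumes inv: "period_inv c R0 z" and "2 \<le> \<tau>" and "a \<le> c l / \<tau>"
  defines "d \<equiv> max 0 (\<beta> - c l / \<tau>)"
  shows "(max 0 (\<beta> - cap z l / (\<tau> - 1)))\<^sup>2 + 2 * d * a / (\<tau> - 1)
       \<le> d\<^sup>2 + 2 * a\<^sup>2 / (\<tau> - 1)\<^sup>2 + (2 * Asum\<^sup>2 / (\<tau> - 1)\<^sup>2 * real (arrival_count z) ^ 2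
           + 2 * d / (\<tau> - 1) * load (attempts z) l)"
proof -
  define e where "e = \<tau> - 1"
  define Z where "Z = load (attempts z) l"
  define k where "k = real (arrival_count z)"
  define \<xi> where "\<xi> = (a - Z) / e"
  have "0 < e"
    using \<open>2 \<le> \<tau>\<close> by (simp add: e_def)
  have "c l - Z \<le> cap z l" "0 \<le> Z" "Z \<le> Asum * k"
    using inv load_nonneg[of "attempts z" l] load_le_Asum_arrival_count[OF inv, of l]
    by (auto simp: period_inv_def Z_def k_def)
  have "c l / \<tau> + \<xi> \<le> (c l - Z) / e"
    unfolding \<xi>_def e_def using \<open>2 \<le> \<tau>\<close> \<open>a \<le> c l / \<tau>\<close> by (intro div_add_div_le_div) auto
  also have "\<dots> \<le> cap z l / e"
    using \<open>c l - Z \<le> cap z l\<close> \<open>0 < e\<close> by (intro divide_right_mono) auto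
  finally have "(max 0 (\<beta> - cap z l / e))\<^sup>2 \<le> (d - \<xi>)\<^sup>2"
    unfolding d_def by (rule pos_part_square_le)
  moreover have "(d - \<xi>)\<^sup>2 = d\<^sup>2 - 2 * d * \<xi> + \<xi>\<^sup>2"
    by (simp add: power2_diff)
  moreover have "2 * d * \<xi> = 2 * d * a / e - 2 * d / e * Z"
    by (simp add: \<xi>_def diff_divide_distrib algebra_simps)
  moreover have "\<xi>\<^sup>2 \<le> 2 * a\<^sup>2 / e\<^sup>2 + 2 * Asum\<^sup>2 / e\<^sup>2 * k\<^sup>2"
  proof -
    have "(a - Z)\<^sup>2 \<le> 2 * a\<^sup>2 + 2 * Z\<^sup>2"
      using zero_le_power2[of "a + Z"] by (simp add: power2_eq_square algebra_simps)
    also have "Z\<^sup>2 \<le> (Asum * k)\<^sup>2"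
      using \<open>0 \<le> Z\<close> \<open>Z \<le> Asum * k\<close> by (intro power_mono) auto
    finally have "(a - Z)\<^sup>2 / e\<^sup>2 \<le> (2 * a\<^sup>2 + 2 * Asum\<^sup>2 * k\<^sup>2) / e\<^sup>2"
      using \<open>0 < e\<close> by (intro divide_right_mono) (auto simp: power_mult_distrib)
    then show ?thesis
      by (simp add: \<xi>_def power_divide add_divide_distrib)
  qed
  ultimately have "(max 0 (\<beta> - cap z l / e))\<^sup>2 + 2 * d * a / e
      \<le> d\<^sup>2 + 2 * a\<^sup>2 / e\<^sup>2 + (2 * Asum\<^sup>2 / e\<^sup>2 * k\<^sup>2 + 2 * d / e * Z)"
    by linarith
  then show ?thesis
    unfolding e_def Z_def k_def .
qed

lemma nn_integral_deficit_step:
  assumes "\<And>l. 0 \<le> c l" "2 \<le> \<tau>" "\<And>i. 0 \<le> x i" "\<And>i. x i \<le> lam i"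
    and feasible: "load x l \<le> c l / \<tau>"
  shows "(\<integral>\<^sup>+z. ennreal ((max 0 (\<beta> - cap z l / (\<tau> - 1)))\<^sup>2) \<partial>measure_pmf (aug_period x (c, R0)))
       \<le> ennreal ((max 0 (\<beta> - c l / \<tau>))\<^sup>2 + deficit_const / (\<tau> - 1)\<^sup>2)"
proof -
  let ?M = "aug_period x (c, R0)"
  define a d e where "a = load x l" and "d = max 0 (\<beta> - c l / \<tau>)" and "e = \<tau> - 1"
  define w C0 q where "w = 2 * d * a / e" and "C0 = d\<^sup>2 + 2 * a\<^sup>2 / e\<^sup>2" and "q = 2 * Asum\<^sup>2 / e\<^sup>2"
  have "0 < e" "0 \<le> d"
    using \<open>2 \<le> \<tau>\<close> by (auto simp: e_def d_def)
  have "0 \<le> a" "a \<le> Asum * Lam"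
    unfolding a_def using assms(3,4) by (auto intro: load_nonneg load_le_Asum_Lam)
  have "0 \<le> w" "0 \<le> C0" "0 \<le> q" "0 \<le> 2 * d / e"
    using \<open>0 < e\<close> \<open>0 \<le> d\<close> \<open>0 \<le> a\<close> by (auto simp: w_def C0_def q_def)
  have inv: "\<And>z. z \<in> set_pmf ?M \<Longrightarrow> period_inv c R0 z"
    by (rule period_inv_aug_period[OF assms(1)])
  have bound: "C0 + q * (Lam + Lam\<^sup>2) \<le> d\<^sup>2 + deficit_const / e\<^sup>2"
    using deficit_const_ge[OF \<open>0 \<le> a\<close> \<open>a \<le> Asum * Lam\<close>, of e] by (simp add: C0_def q_def)
  have "(\<integral>\<^sup>+z. ennreal ((max 0 (\<beta> - cap z l / e))\<^sup>2 + w) \<partial>?M)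
      \<le> (\<integral>\<^sup>+z. ennreal (C0 + (q * real (arrival_count z) ^ 2 + 2 * d / e * load (attempts z) l)) \<partial>?M)"
    using deficit_pointwise[OF inv \<open>2 \<le> \<tau>\<close> feasible]
    by (intro nn_integral_pmf_mono) (simp add: w_def C0_def q_def a_def d_def e_def)
  also have "\<dots> = (\<integral>\<^sup>+z. ennreal C0 \<partial>?M)
      + (\<integral>\<^sup>+z. ennreal (q * real (arrival_count z) ^ 2 + 2 * d / e * load (attempts z) l) \<partial>?M)"
  proof (rule nn_integral_pmf_add)
    show "0 \<le> q * real (arrival_count z) ^ 2 + 2 * d / e * load (attempts z) l"
      if "z \<in> set_pmf ?M" for z
      using attempts_nonneg_aug_period[OF that] \<open>0 \<le> q\<close> \<open>0 \<le> 2 * d / e\<close>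
      by (intro add_nonneg_nonneg mult_nonneg_nonneg load_nonneg) auto
  qed (use \<open>0 \<le> C0\<close> in simp)
  also have "\<dots> = ennreal C0 + ennreal (q * (Lam + Lam\<^sup>2) + 2 * d / e * a)"
    unfolding nn_integral_count_square_load[OF assms(3,4) \<open>0 \<le> q\<close> \<open>0 \<le> 2 * d / e\<close>] a_def
    by simp
  also have "\<dots> \<le> ennreal (d\<^sup>2 + deficit_const / e\<^sup>2 + w)"
  proof -
    have "0 \<le> q * (Lam + Lam\<^sup>2) + 2 * d / e * a"
      using \<open>0 \<le> q\<close> \<open>0 \<le> 2 * d / e\<close> \<open>0 \<le> a\<close> Lam_pos
      by (intro add_nonneg_nonneg mult_nonneg_nonneg) auto
    with \<open>0 \<le> C0\<close> have "ennreal C0 + ennreal (q * (Lam + Lam\<^sup>2) + 2 * d / e * a)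
        = ennreal (C0 + (q * (Lam + Lam\<^sup>2) + 2 * d / e * a))"
      by (rule ennreal_plus[symmetric])
    moreover have "C0 + (q * (Lam + Lam\<^sup>2) + 2 * d / e * a) \<le> d\<^sup>2 + deficit_const / e\<^sup>2 + w"
      using bound by (simp add: w_def)
    ultimately show ?thesis
      by (simp only: ennreal_leI)
  qed
  finally have "(\<integral>\<^sup>+z. ennreal ((max 0 (\<beta> - cap z l / e))\<^sup>2) \<partial>?M) \<le> ennreal (d\<^sup>2 + deficit_const / e\<^sup>2)"
    by (rule nn_integral_pmf_le_cancel) (use \<open>0 \<le> w\<close> deficit_const_nonneg in simp_all)
  then show ?thesis
    by (simp add: d_def e_def)
qed

section \<open>Sensitivity of the LP in the right-hand side\<close>

lemma lp_value_eq: "lp_optimal lam r A b x \<Longrightarrow> lp_value lam r A b = (\<Sum>j\<in>UNIV. r j * x j)"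
  unfolding lp_value_def lp_optimal_def by (rule cSup_eq_maximum) auto

text \<open>Scaling every optimal \<open>x j\<close> by the factors \<open>min 1 (b' l / b l)\<close> of the resources it uses
  gives a feasible point for \<open>b'\<close>.\<close>

definition shrink_factor :: "('m \<Rightarrow> real) \<Rightarrow> ('m \<Rightarrow> real) \<Rightarrow> 'm \<Rightarrow> real" where
  "shrink_factor b b' l = (if b l = 0 then 1 else min 1 (b' l / b l))"

definition shrink :: "('m \<Rightarrow> real) \<Rightarrow> ('m \<Rightarrow> real) \<Rightarrow> ('n \<Rightarrow> real) \<Rightarrow> 'n \<Rightarrow> real" where
  "shrink b b' x j = x j * (\<Prod>l\<in>{l. 0 < A l j}. shrink_factor b b' l)"

definition sensitivity_const :: real where
  "sensitivity_const = (\<Sum>j\<in>UNIV. \<Sum>l\<in>{l. 0 < A l j}. r j / A l j)"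

lemma sensitivity_const_nonneg: "0 \<le> sensitivity_const"
  unfolding sensitivity_const_def by (intro sum_nonneg divide_nonneg_nonneg) (auto simp: r_nonneg)

lemma shrink_factor_bounds:
  "0 \<le> b l \<Longrightarrow> 0 \<le> b' l \<Longrightarrow> 0 \<le> shrink_factor b b' l \<and> shrink_factor b b' l \<le> 1"
  by (auto simp: shrink_factor_def)

lemma lp_feasible_shrink:
  assumes "lp_feasible lam A b x" "\<And>l. 0 \<le> b l" "\<And>l. 0 \<le> b' l"
  shows "lp_feasible lam A b' (shrink b b' x)"
  unfolding lp_feasible_def
proof (intro conjI allI)
  have x: "\<And>j. 0 \<le> x j" "\<And>j. x j \<le> lam j" "\<And>l. (\<Sum>j\<in>UNIV. A l j * x j) \<le> b l"
    using assms(1) by (auto simp: lp_feasible_def)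
  have bounds: "\<And>l. 0 \<le> shrink_factor b b' l \<and> shrink_factor b b' l \<le> 1"
    using assms(2,3) by (rule shrink_factor_bounds)
  have prod_bounds: "0 \<le> (\<Prod>l\<in>{l. 0 < A l j}. shrink_factor b b' l)" "(\<Prod>l\<in>{l. 0 < A l j}. shrink_factor b b' l) \<le> 1" for j
    using bounds by (auto intro: prod_nonneg prod_le_1)
  fix l
  have "(\<Sum>j\<in>UNIV. A l j * shrink b b' x j) \<le> (\<Sum>j\<in>UNIV. shrink_factor b b' l * (A l j * x j))"
  proof (rule sum_mono)
    fix j
    show "A l j * shrink b b' x j \<le> shrink_factor b b' l * (A l j * x j)"
    proof (cases "0 < A l j")
      case True
      then have "(\<Prod>l\<in>{l. 0 < A l j}. shrink_factor b b' l) \<le> shrink_factor b b' l"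
        using bounds by (intro prod_le_factor) auto
      then show ?thesis
        using True x(1)[of j] by (simp add: shrink_def mult_left_mono mult_ac)
    qed (use A_nonneg[of l j] in \<open>simp add: order.order_iff_strict\<close>)
  qed
  also have "\<dots> \<le> shrink_factor b b' l * b l"
    unfolding sum_distrib_left[symmetric] using bounds x(3) by (intro mult_left_mono) auto
  also have "\<dots> \<le> b' l"
    using assms(2,3)[of l] by (auto simp: shrink_factor_def min_def field_simps)
  finally show "(\<Sum>j\<in>UNIV. A l j * shrink b b' x j) \<le> b' l" .
next
  fix j
  have x: "0 \<le> x j" "x j \<le> lam j"
    using assms(1) by (auto simp: lp_feasible_def)
  have "0 \<le> (\<Prod>l\<in>{l. 0 < A l j}. shrink_factor b b' l)" "(\<Prod>l\<in>{l. 0 < A l j}. shrink_factor b b' l) \<le> 1"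
    using shrink_factor_bounds[OF assms(2,3)] by (auto intro: prod_nonneg prod_le_1)
  moreover from this have "x j * (\<Prod>l\<in>{l. 0 < A l j}. shrink_factor b b' l) \<le> x j"
    using x(1) by (intro mult_left_le) auto
  ultimately show "0 \<le> shrink b b' x j" "shrink b b' x j \<le> lam j"
    using x by (auto simp: shrink_def)
qed

lemma shrink_loss:
  assumes "lp_feasible lam A b x" "\<And>l. 0 \<le> b l" "\<And>l. 0 \<le> b' l"
  shows "x j - shrink b b' x j \<le> (\<Sum>l\<in>{l. 0 < A l j}. max 0 (b l - b' l) / A l j)"
proof -
  have x: "0 \<le> x j" "\<And>l. (\<Sum>j\<in>UNIV. A l j * x j) \<le> b l"
    using assms(1) by (auto simp: lp_feasible_def)
  have "x j - shrink b b' x j = x j * (1 - (\<Prod>l\<in>{l. 0 < A l j}. shrink_factor b b' l))"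
    by (simp add: shrink_def algebra_simps)
  also have "\<dots> \<le> x j * (\<Sum>l\<in>{l. 0 < A l j}. 1 - shrink_factor b b' l)"
    using Weierstrass_prod_ineq[of "{l. 0 < A l j}" "\<lambda>l. 1 - shrink_factor b b' l"]
      shrink_factor_bounds[OF assms(2,3)] x(1)
    by (intro mult_left_mono) (auto simp: sum_subtractf)
  also have "\<dots> \<le> (\<Sum>l\<in>{l. 0 < A l j}. max 0 (b l - b' l) / A l j)"
    unfolding sum_distrib_left
  proof (rule sum_mono)
    fix l assume "l \<in> {l. 0 < A l j}"
    then have "0 < A l j"
      by simp
    show "x j * (1 - shrink_factor b b' l) \<le> max 0 (b l - b' l) / A l j"
    proof (cases "b l = 0")
      case False
      then have "0 < b l"
        using assms(2)[of l] by simp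
      have "A l j * x j \<le> (\<Sum>j\<in>UNIV. A l j * x j)"
        using A_nonneg assms(1) by (intro member_le_sum) (auto simp: lp_feasible_def)
      then have "x j \<le> b l / A l j"
        using x(2)[of l] \<open>0 < A l j\<close> by (simp add: field_simps)
      have "1 - shrink_factor b b' l = max 0 (b l - b' l) / b l"
        using \<open>0 < b l\<close> by (auto simp: shrink_factor_def min_def max_def field_simps)
      then have "x j * (1 - shrink_factor b b' l) \<le> b l / A l j * (max 0 (b l - b' l) / b l)"
        using \<open>x j \<le> b l / A l j\<close> \<open>0 < b l\<close> by (simp only:) (rule mult_right_mono, auto)
      then show ?thesis
        using \<open>0 < b l\<close> by simp
    qed (use \<open>0 < A l j\<close> in \<open>simp add: shrink_factor_def\<close>)
  qed
  finally show ?thesis .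
qed

definition drift_const :: real where
  "drift_const = sensitivity_const * real CARD('m) * (deficit_const + 1 / 2)"

lemma drift_const_nonneg: "0 \<le> drift_const"
  unfolding drift_const_def using sensitivity_const_nonneg deficit_const_nonneg by simp

lemma lp_optimal_sensitivity:
  assumes "\<And>l. 0 \<le> b l" "\<And>l. 0 \<le> b' l"
    and "lp_optimal lam r A b x" "lp_optimal lam r A b' x'"
  shows "(\<Sum>j\<in>UNIV. r j * x j) \<le> (\<Sum>j\<in>UNIV. r j * x' j) + sensitivity_const * (\<Sum>l\<in>UNIV. max 0 (b l - b' l))"
proof -
  define D where "D = (\<Sum>l\<in>UNIV. max 0 (b l - b' l))"
  have feasible: "lp_feasible lam A b x"
    using assms(3) by (simp add: lp_optimal_def)
  have "(\<Sum>j\<in>UNIV. r j * shrink b b' x j) \<le> (\<Sum>j\<in>UNIV. r j * x' j)"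
    using assms(4) lp_feasible_shrink[OF feasible assms(1,2)] by (simp add: lp_optimal_def)
  moreover have "(\<Sum>j\<in>UNIV. r j * x j) - (\<Sum>j\<in>UNIV. r j * shrink b b' x j) \<le> sensitivity_const * D"
  proof -
    have "(\<Sum>j\<in>UNIV. r j * x j) - (\<Sum>j\<in>UNIV. r j * shrink b b' x j) = (\<Sum>j\<in>UNIV. r j * (x j - shrink b b' x j))"
      by (simp add: sum_subtractf[symmetric] algebra_simps)
    also have "\<dots> \<le> (\<Sum>j\<in>UNIV. r j * (\<Sum>l\<in>{l. 0 < A l j}. max 0 (b l - b' l) / A l j))"
      using shrink_loss[OF feasible assms(1,2)] r_nonneg by (intro sum_mono mult_left_mono)
    also have "\<dots> \<le> (\<Sum>j\<in>UNIV. \<Sum>l\<in>{l. 0 < A l j}. r j / A l j * D)"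
      unfolding sum_distrib_left
    proof (intro sum_mono)
      fix j l assume "l \<in> {l. 0 < A l j}"
      have "max 0 (b l - b' l) \<le> D"
        unfolding D_def by (rule member_le_sum) auto
      then have "r j / A l j * max 0 (b l - b' l) \<le> r j / A l j * D"
        using \<open>l \<in> {l. 0 < A l j}\<close> r_nonneg[of j] by (intro mult_left_mono) auto
      then show "r j * (max 0 (b l - b' l) / A l j) \<le> r j / A l j * D"
        by simp
    qed
    finally show ?thesis
      by (simp add: sensitivity_const_def sum_distrib_right)
  qed
  ultimately show ?thesis
    by (simp add: D_def)
qed

end

section \<open>The frequent re-solving policy\<close>

locale fr_policy = nrm lam r A for lam r :: "'n::finite \<Rightarrow> real" and A :: "'m::finite \<Rightarrow> 'n \<Rightarrow> real" +
  fixes sel :: "('m \<Rightarrow> real) \<Rightarrow> 'n \<Rightarrow> real" and C :: "'m \<Rightarrow> real" and T :: nat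
  assumes sel_optimal: "\<And>b. (\<And>l. 0 \<le> b l) \<Longrightarrow> lp_optimal lam r A b (sel b)"
    and C_nonneg: "\<And>l. 0 \<le> C l"
begin

abbreviation run :: "nat \<Rightarrow> (('m \<Rightarrow> real) \<times> real) pmf" where
  "run t \<equiv> fr_run lam r A sel C T t"

definition rhs :: "nat \<Rightarrow> ('m \<Rightarrow> real) \<times> real \<Rightarrow> 'm \<Rightarrow> real" where
  "rhs t s = (\<lambda>l. fst s l / real (T - t))"

definition lp_rate :: "nat \<Rightarrow> ('m \<Rightarrow> real) \<times> real \<Rightarrow> real" where
  "lp_rate t s = (\<Sum>j\<in>UNIV. r j * sel (rhs t s) j)"

definition dlp_rate :: real where
  "dlp_rate = lp_rate 0 (C, 0)"

definition deficit :: "nat \<Rightarrow> ('m \<Rightarrow> real) \<times> real \<Rightarrow> real" where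
  "deficit t s = (\<Sum>l\<in>UNIV. (max 0 (rhs 0 (C, 0) l - rhs t s l))\<^sup>2)"

definition exp_revenue :: "nat \<Rightarrow> ennreal" where
  "exp_revenue t = (\<integral>\<^sup>+s. ennreal (snd s) \<partial>measure_pmf (run t))"

lemma run_Suc: "run (Suc t) = run t \<bind> (\<lambda>s. map_pmf base (aug_period (sel (rhs t s)) s))"
  by (simp add: map_aug_period rhs_def)

lemma state_nonneg_run:
  assumes "s \<in> set_pmf (run t)"
  shows "\<forall>l. 0 \<le> fst s l" "0 \<le> snd s"
proof -
  have "(\<forall>l. 0 \<le> fst s l) \<and> 0 \<le> snd s"
    using assms
  proof (induction t arbitrary: s)
    case (Suc t)
    have "s \<in> set_pmf (run t \<bind> (\<lambda>s. map_pmf base (aug_period (sel (rhs t s)) s)))"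
      using Suc.prems by (simp only: run_Suc)
    then obtain s0 z where s0: "s0 \<in> set_pmf (run t)"
      and z: "z \<in> set_pmf (aug_period (sel (rhs t s0)) (fst s0, snd s0))" and s: "s = base z"
      by auto
    have "period_inv (fst s0) (snd s0) z"
      using Suc.IH[OF s0] z by (intro period_inv_aug_period) auto
    moreover from this have "0 \<le> revenue z"
      using Suc.IH[OF s0] by (intro revenue_nonneg_period_inv) auto
    ultimately show ?case
      unfolding s by (simp add: period_inv_def)
  qed (simp add: C_nonneg)
  then show "\<forall>l. 0 \<le> fst s l" "0 \<le> snd s"
    by auto
qed

lemma rhs_nonneg: "s \<in> set_pmf (run t) \<Longrightarrow> 0 \<le> rhs t s l"
  using state_nonneg_run[of s t] by (simp add: rhs_def)

lemma sel_rhs_feasible: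
  assumes "s \<in> set_pmf (run t)"
  shows "\<And>i. 0 \<le> sel (rhs t s) i" "\<And>i. sel (rhs t s) i \<le> lam i"
    "\<And>l. load (sel (rhs t s)) l \<le> fst s l / real (T - t)"
  using sel_optimal[of "rhs t s"] rhs_nonneg[OF assms]
  by (auto simp: lp_optimal_def lp_feasible_def load_def rhs_def)

lemma lp_rate_nonneg: "s \<in> set_pmf (run t) \<Longrightarrow> 0 \<le> lp_rate t s"
  unfolding lp_rate_def by (intro sum_nonneg mult_nonneg_nonneg r_nonneg sel_rhs_feasible)

lemma dlp_rate_nonneg: "0 \<le> dlp_rate"
  unfolding dlp_rate_def by (rule lp_rate_nonneg) simp

lemma deficit_nonneg: "0 \<le> deficit t s"
  unfolding deficit_def by (simp add: sum_nonneg)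

lemma exp_revenue_step_lower:
  assumes "t < T"
  shows "exp_revenue t + (\<integral>\<^sup>+s. ennreal (lp_rate t s) \<partial>measure_pmf (run t))
       \<le> exp_revenue (Suc t) + ennreal (blocking_const / sqrt (real (T - t)))"
proof -
  have "exp_revenue t + (\<integral>\<^sup>+s. ennreal (lp_rate t s) \<partial>measure_pmf (run t))
      = (\<integral>\<^sup>+s. ennreal (snd s + lp_rate t s) \<partial>measure_pmf (run t))"
    unfolding exp_revenue_def
    by (rule nn_integral_pmf_add[symmetric]) (auto dest: state_nonneg_run lp_rate_nonneg)
  also have "\<dots> \<le> (\<integral>\<^sup>+s. (\<integral>\<^sup>+z. ennreal (revenue z) \<partial>measure_pmf (aug_period (sel (rhs t s)) s))
      + ennreal (blocking_const / sqrt (real (T - t))) \<partial>measure_pmf (run t))"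
  proof (intro nn_integral_mono_AE, unfold AE_measure_pmf_iff, intro ballI)
    fix s assume s: "s \<in> set_pmf (run t)"
    have "ennreal (snd s + lp_rate t s)
        \<le> (\<integral>\<^sup>+z. ennreal (revenue z) \<partial>measure_pmf (aug_period (sel (rhs t s)) (fst s, snd s)))
          + ennreal (blocking_const / sqrt (real (T - t)))"
      unfolding lp_rate_def
      by (rule period_revenue_lower) (use assms state_nonneg_run[OF s] sel_rhs_feasible[OF s] in auto)
    then show "ennreal (snd s + lp_rate t s)
        \<le> (\<integral>\<^sup>+z. ennreal (revenue z) \<partial>measure_pmf (aug_period (sel (rhs t s)) s))
          + ennreal (blocking_const / sqrt (real (T - t)))"
      by simp
  qed
  also have "\<dots> = exp_revenue (Suc t) + ennreal (blocking_const / sqrt (real (T - t)))"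
    unfolding exp_revenue_def run_Suc by (subst nn_integral_add) auto
  finally show ?thesis .
qed

lemma exp_revenue_step_upper: "exp_revenue (Suc t) \<le> exp_revenue t + ennreal (\<Sum>j\<in>UNIV. r j * lam j)"
proof -
  have "exp_revenue (Suc t)
      = (\<integral>\<^sup>+s. (\<integral>\<^sup>+z. ennreal (revenue z) \<partial>measure_pmf (aug_period (sel (rhs t s)) s)) \<partial>measure_pmf (run t))"
    unfolding exp_revenue_def run_Suc by simp
  also have "\<dots> \<le> (\<integral>\<^sup>+s. ennreal (snd s + (\<Sum>j\<in>UNIV. r j * lam j)) \<partial>measure_pmf (run t))"
  proof (intro nn_integral_mono_AE, unfold AE_measure_pmf_iff, intro ballI)
    fix s assume s: "s \<in> set_pmf (run t)"
    have "(\<integral>\<^sup>+z. ennreal (revenue z) \<partial>measure_pmf (aug_period (sel (rhs t s)) (fst s, snd s)))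
        \<le> ennreal (snd s + (\<Sum>j\<in>UNIV. r j * sel (rhs t s) j))"
      by (rule period_revenue_upper) (use state_nonneg_run[OF s] sel_rhs_feasible[OF s] in auto)
    also have "\<dots> \<le> ennreal (snd s + (\<Sum>j\<in>UNIV. r j * lam j))"
      using sel_rhs_feasible(2)[OF s] r_nonneg
      by (intro ennreal_leI add_left_mono sum_mono mult_left_mono) auto
    finally show "(\<integral>\<^sup>+z. ennreal (revenue z) \<partial>measure_pmf (aug_period (sel (rhs t s)) s))
        \<le> ennreal (snd s + (\<Sum>j\<in>UNIV. r j * lam j))"
      by simp
  qed
  also have "\<dots> = exp_revenue t + ennreal (\<Sum>j\<in>UNIV. r j * lam j)"
    unfolding exp_revenue_def using lam_pos r_nonneg
    by (subst nn_integral_pmf_add)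
      (auto dest: state_nonneg_run intro!: sum_nonneg mult_nonneg_nonneg less_imp_le[OF lam_pos])
  finally show ?thesis .
qed

lemma nn_integral_deficit_period:
  assumes s: "s \<in> set_pmf (run t)" and "Suc t < T"
  shows "(\<integral>\<^sup>+z. ennreal (deficit (Suc t) (base z)) \<partial>measure_pmf (aug_period (sel (rhs t s)) s))
       \<le> ennreal (deficit t s + real CARD('m) * deficit_const / (real (T - t) - 1)\<^sup>2)"
proof -
  let ?M = "aug_period (sel (rhs t s)) (fst s, snd s)"
  define \<tau> where "\<tau> = real (T - t)"
  have "2 \<le> \<tau>" "real (T - Suc t) = \<tau> - 1"
    using assms(2) by (auto simp: \<tau>_def)
  have "(\<integral>\<^sup>+z. ennreal (deficit (Suc t) (base z)) \<partial>measure_pmf ?M)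
      = (\<Sum>l\<in>UNIV. \<integral>\<^sup>+z. ennreal ((max 0 (rhs 0 (C, 0) l - cap z l / (\<tau> - 1)))\<^sup>2) \<partial>measure_pmf ?M)"
    unfolding deficit_def rhs_def \<open>real (T - Suc t) = \<tau> - 1\<close> by (rule nn_integral_pmf_sum) auto
  also have "\<dots> \<le> (\<Sum>l\<in>UNIV. ennreal ((max 0 (rhs 0 (C, 0) l - fst s l / \<tau>))\<^sup>2 + deficit_const / (\<tau> - 1)\<^sup>2))"
    using \<open>2 \<le> \<tau>\<close> state_nonneg_run[OF s] sel_rhs_feasible[OF s]
    by (intro sum_mono nn_integral_deficit_step) (auto simp: \<tau>_def)
  also have "\<dots> = ennreal (deficit t s + real CARD('m) * deficit_const / (\<tau> - 1)\<^sup>2)"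
    using deficit_const_nonneg
    by (subst sum_ennreal) (auto simp: deficit_def rhs_def \<tau>_def sum.distrib)
  finally show ?thesis
    by (simp add: \<tau>_def)
qed

text \<open>One more period adds \<open>O(1 / (T - t)\<^sup>2)\<close> to the expected deficit, which
  \<open>inverse_add_inverse_square_le\<close> absorbs into the bound \<open>2 / (T - t)\<close>.\<close>

lemma exp_deficit_le:
  assumes "t < T"
  shows "(\<integral>\<^sup>+s. ennreal (deficit t s) \<partial>measure_pmf (run t))
       \<le> ennreal (real CARD('m) * deficit_const * (2 / real (T - t)))"
  using assms
proof (induction t)
  case 0
  then show ?case
    using deficit_const_nonneg by (simp add: deficit_def)
next
  case (Suc t)
  define K \<tau> where "K = real CARD('m) * deficit_const" and "\<tau> = real (T - t)"
  have "0 \<le> K"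
    using deficit_const_nonneg by (simp add: K_def)
  have "2 \<le> \<tau>" "real (T - Suc t) = \<tau> - 1"
    using Suc.prems by (auto simp: \<tau>_def)
  have "(\<integral>\<^sup>+s. ennreal (deficit (Suc t) s) \<partial>measure_pmf (run (Suc t)))
      \<le> (\<integral>\<^sup>+s. ennreal (deficit t s + K / (\<tau> - 1)\<^sup>2) \<partial>measure_pmf (run t))"
    unfolding run_Suc using nn_integral_deficit_period Suc.prems
    by (simp add: K_def \<tau>_def mult_ac, intro nn_integral_mono_AE) (auto simp: AE_measure_pmf_iff)
  also have "\<dots> = (\<integral>\<^sup>+s. ennreal (deficit t s) \<partial>measure_pmf (run t)) + ennreal (K / (\<tau> - 1)\<^sup>2)"
    using \<open>0 \<le> K\<close> by (subst nn_integral_pmf_add) (auto simp: deficit_nonneg)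
  also have "\<dots> \<le> ennreal (K * (2 / \<tau>)) + ennreal (K / (\<tau> - 1)\<^sup>2)"
    using Suc by (simp add: K_def \<tau>_def add_right_mono)
  also have "\<dots> = ennreal (K * (2 / \<tau> + 1 / (\<tau> - 1)\<^sup>2))"
    using \<open>0 \<le> K\<close> \<open>2 \<le> \<tau>\<close> by (simp add: ennreal_plus[symmetric] distrib_left del: ennreal_plus)
  also have "\<dots> \<le> ennreal (K * (2 / real (T - Suc t)))"
    using inverse_add_inverse_square_le[OF \<open>2 \<le> \<tau>\<close>] \<open>0 \<le> K\<close>
    unfolding \<open>real (T - Suc t) = \<tau> - 1\<close> by (intro ennreal_leI mult_left_mono)
  finally show ?case
    by (simp add: K_def)
qed

lemma dlp_rate_le:
  assumes s: "s \<in> set_pmf (run t)" and "t < T"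
  defines "\<tau> \<equiv> real (T - t)"
  shows "dlp_rate \<le> lp_rate t s + sensitivity_const * sqrt \<tau> / 2 * deficit t s
                    + sensitivity_const * real CARD('m) / (2 * sqrt \<tau>)"
proof -
  have "0 < sqrt \<tau>"
    using \<open>t < T\<close> by (simp add: \<tau>_def)
  define D where "D l = max 0 (rhs 0 (C, 0) l - rhs t s l)" for l
  have b0: "\<And>l. 0 \<le> rhs 0 (C, 0) l"
    by (simp add: rhs_def C_nonneg)
  have b: "\<And>l. 0 \<le> rhs t s l"
    by (rule rhs_nonneg[OF s])
  have "dlp_rate \<le> lp_rate t s + sensitivity_const * (\<Sum>l\<in>UNIV. D l)"
    unfolding dlp_rate_def lp_rate_def D_def
    by (rule lp_optimal_sensitivity[OF b0 b sel_optimal[OF b0] sel_optimal[OF b]])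
  moreover have "D l \<le> (sqrt \<tau> * (D l)\<^sup>2 + 1 / sqrt \<tau>) / 2" for l
    using le_square_div_add[of "1 / sqrt \<tau>" "D l"] \<open>0 < sqrt \<tau>\<close> by (simp add: mult.commute)
  then have "(\<Sum>l\<in>UNIV. D l) \<le> (sqrt \<tau> * deficit t s + real CARD('m) / sqrt \<tau>) / 2"
    using sum_mono[of UNIV D "\<lambda>l. (sqrt \<tau> * (D l)\<^sup>2 + 1 / sqrt \<tau>) / 2"]
    by (simp add: deficit_def D_def sum_divide_distrib[symmetric] sum.distrib sum_distrib_left)
  then have "sensitivity_const * (\<Sum>l\<in>UNIV. D l)
      \<le> sensitivity_const * ((sqrt \<tau> * deficit t s + real CARD('m) / sqrt \<tau>) / 2)"
    using sensitivity_const_nonneg by (rule mult_left_mono)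
  ultimately show ?thesis
    by (simp add: field_simps)
qed

lemma dlp_rate_le_exp_lp_rate:
  assumes "t < T"
  shows "ennreal dlp_rate
       \<le> (\<integral>\<^sup>+s. ennreal (lp_rate t s) \<partial>measure_pmf (run t)) + ennreal (drift_const / sqrt (real (T - t)))"
proof -
  define \<tau> K where "\<tau> = real (T - t)" and "K = real CARD('m) * deficit_const"
  define a b where "a = sensitivity_const * sqrt \<tau> / 2"
    and "b = sensitivity_const * real CARD('m) / (2 * sqrt \<tau>)"
  have "1 \<le> \<tau>"
    using assms by (simp add: \<tau>_def)
  then have "0 \<le> a" "0 \<le> b" "0 \<le> K * (2 / \<tau>)"
    using sensitivity_const_nonneg deficit_const_nonneg by (auto simp: a_def b_def K_def)
  have "\<tau> = sqrt \<tau> * sqrt \<tau>"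
    using \<open>1 \<le> \<tau>\<close> by simp
  then have drift: "a * (K * (2 / \<tau>)) + b = drift_const / sqrt \<tau>"
    using \<open>1 \<le> \<tau>\<close> unfolding a_def b_def K_def drift_const_def by (simp add: field_simps)
  have "ennreal dlp_rate = (\<integral>\<^sup>+s. ennreal dlp_rate \<partial>measure_pmf (run t))"
    by simp
  also have "\<dots> \<le> (\<integral>\<^sup>+s. ennreal (lp_rate t s + (a * deficit t s + b)) \<partial>measure_pmf (run t))"
    using dlp_rate_le assms by (intro nn_integral_pmf_mono) (simp add: a_def b_def \<tau>_def add.assoc)
  also have "\<dots> = (\<integral>\<^sup>+s. ennreal (lp_rate t s) \<partial>measure_pmf (run t))
      + (ennreal a * (\<integral>\<^sup>+s. ennreal (deficit t s) \<partial>measure_pmf (run t)) + ennreal b)"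
    using \<open>0 \<le> a\<close> \<open>0 \<le> b\<close> by (intro nn_integral_pmf_add_affine lp_rate_nonneg deficit_nonneg)
  also have "\<dots> \<le> (\<integral>\<^sup>+s. ennreal (lp_rate t s) \<partial>measure_pmf (run t))
      + (ennreal a * ennreal (K * (2 / \<tau>)) + ennreal b)"
    using exp_deficit_le[OF assms] by (intro add_mono mult_left_mono order_refl) (auto simp: K_def \<tau>_def)
  also have "\<dots> = (\<integral>\<^sup>+s. ennreal (lp_rate t s) \<partial>measure_pmf (run t)) + ennreal (drift_const / sqrt \<tau>)"
    using \<open>0 \<le> a\<close> \<open>0 \<le> b\<close> \<open>0 \<le> K * (2 / \<tau>)\<close> mult_nonneg_nonneg[OF \<open>0 \<le> a\<close> \<open>0 \<le> K * (2 / \<tau>)\<close>]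
    by (simp only: ennreal_mult[symmetric] ennreal_plus[symmetric] drift)
  finally show ?thesis
    by (simp only: \<tau>_def)
qed

lemma exp_revenue_lower:
  assumes "t \<le> T"
  shows "ennreal (real t * dlp_rate)
       \<le> exp_revenue t + ennreal ((blocking_const + drift_const) * (\<Sum>i<t. 1 / sqrt (real (T - i))))"
  using assms
proof (induction t)
  case 0
  then show ?case by simp
next
  case (Suc t)
  define E where "E = (blocking_const + drift_const) * (\<Sum>i<t. 1 / sqrt (real (T - i)))"
  define \<tau> where "\<tau> = real (T - t)"
  have "t < T"
    using Suc.prems by simp
  have "0 \<le> E" "0 \<le> blocking_const / sqrt \<tau>" "0 \<le> drift_const / sqrt \<tau>"
    using blocking_const_nonneg drift_const_nonneg unfolding E_def \<tau>_def
    by (auto intro!: mult_nonneg_nonneg sum_nonneg)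
  have "ennreal (real (Suc t) * dlp_rate) = ennreal (real t * dlp_rate) + ennreal dlp_rate"
    using dlp_rate_nonneg by (simp add: distrib_right ennreal_plus)
  also have "\<dots> \<le> (exp_revenue t + ennreal E)
      + ((\<integral>\<^sup>+s. ennreal (lp_rate t s) \<partial>measure_pmf (run t)) + ennreal (drift_const / sqrt \<tau>))"
    using Suc.IH \<open>t < T\<close> dlp_rate_le_exp_lp_rate[OF \<open>t < T\<close>]
    by (intro add_mono) (auto simp: E_def \<tau>_def)
  also have "\<dots> = (exp_revenue t + (\<integral>\<^sup>+s. ennreal (lp_rate t s) \<partial>measure_pmf (run t)))
      + (ennreal E + ennreal (drift_const / sqrt \<tau>))"
    by (simp add: ac_simps)
  also have "\<dots> \<le> (exp_revenue (Suc t) + ennreal (blocking_const / sqrt \<tau>))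
      + (ennreal E + ennreal (drift_const / sqrt \<tau>))"
    using exp_revenue_step_lower[OF \<open>t < T\<close>] by (intro add_right_mono) (simp add: \<tau>_def)
  also have "\<dots> = exp_revenue (Suc t) + ennreal (blocking_const / sqrt \<tau> + E + drift_const / sqrt \<tau>)"
    using \<open>0 \<le> E\<close> \<open>0 \<le> blocking_const / sqrt \<tau>\<close> \<open>0 \<le> drift_const / sqrt \<tau>\<close>
    by (simp add: ennreal_plus ac_simps del: ennreal_plus_if)
  also have "blocking_const / sqrt \<tau> + E + drift_const / sqrt \<tau>
      = (blocking_const + drift_const) * (\<Sum>i<Suc t. 1 / sqrt (real (T - i)))"
    unfolding E_def \<tau>_def by (simp add: algebra_simps add_divide_distrib)
  finally show ?case .
qed

lemma exp_revenue_upper: "exp_revenue t \<le> ennreal (real t * (\<Sum>j\<in>UNIV. r j * lam j))"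
proof (induction t)
  case 0
  then show ?case by (simp add: exp_revenue_def)
next
  case (Suc t)
  have "0 \<le> (\<Sum>j\<in>UNIV. r j * lam j)"
    using r_nonneg lam_pos by (intro sum_nonneg mult_nonneg_nonneg) (auto intro: less_imp_le)
  then have "ennreal (real t * (\<Sum>j\<in>UNIV. r j * lam j)) + ennreal (\<Sum>j\<in>UNIV. r j * lam j)
      = ennreal (real (Suc t) * (\<Sum>j\<in>UNIV. r j * lam j))"
    by (simp add: ennreal_plus[symmetric] distrib_right del: ennreal_plus)
  moreover have "exp_revenue t + ennreal (\<Sum>j\<in>UNIV. r j * lam j)
      \<le> ennreal (real t * (\<Sum>j\<in>UNIV. r j * lam j)) + ennreal (\<Sum>j\<in>UNIV. r j * lam j)"
    using Suc.IH by (rule add_right_mono)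
  ultimately show ?case
    using exp_revenue_step_upper[of t] by simp
qed

lemma regret_bound:
  "v_DLP lam r A C T - v_FR lam r A sel C T \<le> 2 * (blocking_const + drift_const) * sqrt (real T)"
proof -
  define E where "E = (blocking_const + drift_const) * (\<Sum>i<T. 1 / sqrt (real (T - i)))"
  have "0 \<le> E"
    unfolding E_def using blocking_const_nonneg drift_const_nonneg by (auto intro!: mult_nonneg_nonneg sum_nonneg)
  have "v_DLP lam r A C T = real T * dlp_rate"
    unfolding v_DLP_def dlp_rate_def lp_rate_def
    using lp_value_eq[OF sel_optimal, of "rhs 0 (C, 0)"] C_nonneg by (simp add: rhs_def)
  moreover have "v_FR lam r A sel C T = enn2real (exp_revenue T)"
    unfolding v_FR_def exp_revenue_def
    by (rule integral_eq_nn_integral) (auto simp: AE_measure_pmf_iff dest: state_nonneg_run)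
  moreover have "real T * dlp_rate \<le> enn2real (exp_revenue T) + E"
  proof -
    have "exp_revenue T \<noteq> \<top>"
      using exp_revenue_upper[of T] by (auto simp: top_unique)
    then have "ennreal (real T * dlp_rate) \<le> ennreal (enn2real (exp_revenue T) + E)"
      using exp_revenue_lower[of T] \<open>0 \<le> E\<close> by (simp add: E_def ennreal_plus ennreal_enn2real_if)
    then show ?thesis
      using \<open>0 \<le> E\<close> by (subst (asm) ennreal_le_iff) (auto intro: add_nonneg_nonneg)
  qed
  moreover have "E \<le> (blocking_const + drift_const) * (2 * sqrt (real T))"
    unfolding E_def using sum_inverse_sqrt_le[of T T] blocking_const_nonneg drift_const_nonneg
    by (intro mult_left_mono) auto
  ultimately show ?thesis
    by (simp add: mult_ac)
qed

end

theorem proposition3: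
  fixes lam r :: "'n::finite \<Rightarrow> real" and A :: "'m::finite \<Rightarrow> 'n \<Rightarrow> real"
  assumes "\<forall>j. 0 < lam j" and "\<forall>j. 0 \<le> r j" and "\<forall>l j. 0 \<le> A l j"
  shows "\<exists>M::real. \<exists>T1::nat. \<forall>sel C (T::nat).
           (\<forall>b. (\<forall>l. 0 \<le> b l) \<longrightarrow> lp_optimal lam r A b (sel b)) \<longrightarrow>
           (\<forall>l. 0 \<le> C l) \<longrightarrow> 0 < T \<longrightarrow> T1 \<le> T \<longrightarrow>
           v_DLP lam r A C T - v_FR lam r A sel C T \<le> M * sqrt (real T)"
proof -
  interpret nrm lam r A
    using assms by unfold_locales auto
  have "v_DLP lam r A C T - v_FR lam r A sel C T \<le> 2 * (blocking_const + drift_const) * sqrt (real T)"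
    if "\<forall>b. (\<forall>l. 0 \<le> b l) \<longrightarrow> lp_optimal lam r A b (sel b)" "\<forall>l. 0 \<le> C l"
    for sel C and T :: nat
  proof -
    interpret fr_policy lam r A sel C T
      using that by unfold_locales auto
    show ?thesis
      by (rule regret_bound)
  qed
  then show ?thesis
    by blast
qed

end
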